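(* Let $T:M_d\to M_d$ be completely positive with $T(I)\le I$, and assume $T$ belongs to a finite set $A$ of positive subunital maps on $M_d$ that is closed under composition. Then $n_T\le d$. More precisely, if $n=n_T$ and \[ Q=\bigvee_{k=0}^{n-1}\mathrm{supp}(T^k(d(T))),\qquad s=\mathrm{rank}(Q), \] then $n_T\le s\le d$.
   Context: $M_d$ is the algebra of complex $d\times d$ matrices ordered by positive semidefiniteness, with unit $I$. A map is positive if it preserves positive semidefiniteness and subunital if $T(I)\le I$. The defect is $d(T)=I-T(I)$, the stabilization index is $n_T=\min\{n\ge1: T^n(d(T))=0\}$ (with $T^0=\mathrm{id}$). For positive semidefinite $x$, $\mathrm{supp}(x)$ is the orthogonal projection onto the range of $x$. *)

theory Defs
  imports "Jordan_Normal_Form.Schur_Decomposition" "Jordan_Normal_Form.DL_Rank"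
begin

definition psd :: "nat \<Rightarrow> complex mat \<Rightarrow> bool" where
  "psd n A \<longleftrightarrow> A \<in> carrier_mat n n \<and> mat_adjoint A = A \<and>
     (\<forall>v \<in> carrier_vec n. 0 \<le> Re ((A *\<^sub>v v) \<bullet>c v))"

definition loewner_le :: "nat \<Rightarrow> complex mat \<Rightarrow> complex mat \<Rightarrow> bool" where
  "loewner_le n A B \<longleftrightarrow> A \<in> carrier_mat n n \<and> B \<in> carrier_mat n n \<and> psd n (B - A)"

text \<open>A complex-linear map M_d -> M_d (behaviour outside the carrier is irrelevant).\<close>
definition lin_map :: "nat \<Rightarrow> (complex mat \<Rightarrow> complex mat) \<Rightarrow> bool" where
  "lin_map d T \<longleftrightarrow> (\<forall>X \<in> carrier_mat d d. T X \<in> carrier_mat d d) \<and>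
     (\<forall>X \<in> carrier_mat d d. \<forall>Y \<in> carrier_mat d d. T (X + Y) = T X + T Y) \<and>
     (\<forall>c. \<forall>X \<in> carrier_mat d d. T (c \<cdot>\<^sub>m X) = c \<cdot>\<^sub>m T X)"

definition positive_map :: "nat \<Rightarrow> (complex mat \<Rightarrow> complex mat) \<Rightarrow> bool" where
  "positive_map d T \<longleftrightarrow> lin_map d T \<and> (\<forall>X. psd d X \<longrightarrow> psd d (T X))"

definition subunital :: "nat \<Rightarrow> (complex mat \<Rightarrow> complex mat) \<Rightarrow> bool" where
  "subunital d T \<longleftrightarrow> loewner_le d (T (1\<^sub>m d)) (1\<^sub>m d)"

definition block :: "nat \<Rightarrow> complex mat \<Rightarrow> nat \<Rightarrow> nat \<Rightarrow> complex mat" where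
  "block d X p q = mat d d (\<lambda>(a, b). X $$ (p * d + a, q * d + b))"

text \<open>Ampliation id_{M_k} (x) T acting on M_k(M_d) = M_{kd}, blockwise.\<close>
definition ampliation :: "nat \<Rightarrow> nat \<Rightarrow> (complex mat \<Rightarrow> complex mat) \<Rightarrow> complex mat \<Rightarrow> complex mat" where
  "ampliation k d T X = mat (k * d) (k * d)
     (\<lambda>(i, j). T (block d X (i div d) (j div d)) $$ (i mod d, j mod d))"

definition completely_positive :: "nat \<Rightarrow> (complex mat \<Rightarrow> complex mat) \<Rightarrow> bool" where
  "completely_positive d T \<longleftrightarrow> lin_map d T \<and>
     (\<forall>k \<ge> 1. \<forall>X. psd (k * d) X \<longrightarrow> psd (k * d) (ampliation k d T X))"

text \<open>Closure under composition of a set of maps on M_d (maps identified when they agree on M_d).\<close>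
definition comp_closed :: "nat \<Rightarrow> (complex mat \<Rightarrow> complex mat) set \<Rightarrow> bool" where
  "comp_closed d A \<longleftrightarrow> (\<forall>S \<in> A. \<forall>R \<in> A. \<exists>U \<in> A. \<forall>X \<in> carrier_mat d d. U X = S (R X))"

definition defect :: "nat \<Rightarrow> (complex mat \<Rightarrow> complex mat) \<Rightarrow> complex mat" where
  "defect d T = 1\<^sub>m d - T (1\<^sub>m d)"

definition stab_index :: "nat \<Rightarrow> (complex mat \<Rightarrow> complex mat) \<Rightarrow> nat" where
  "stab_index d T = (LEAST n. n \<ge> 1 \<and> (T ^^ n) (defect d T) = 0\<^sub>m d d)"

definition is_proj :: "nat \<Rightarrow> complex mat \<Rightarrow> bool" where
  "is_proj d P \<longleftrightarrow> P \<in> carrier_mat d d \<and> mat_adjoint P = P \<and> P * P = P"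

definition mat_range :: "nat \<Rightarrow> complex mat \<Rightarrow> complex vec set" where
  "mat_range d X = {X *\<^sub>v v | v. v \<in> carrier_vec d}"

definition supp :: "nat \<Rightarrow> complex mat \<Rightarrow> complex mat" where
  "supp d X = (THE P. is_proj d P \<and> mat_range d P = mat_range d X)"

definition proj_join :: "nat \<Rightarrow> complex mat set \<Rightarrow> complex mat" where
  "proj_join d S = (THE Q. is_proj d Q \<and> (\<forall>P \<in> S. loewner_le d P Q) \<and>
      (\<forall>R. is_proj d R \<and> (\<forall>P \<in> S. loewner_le d P R) \<longrightarrow> loewner_le d Q R))"

definition mrank :: "nat \<Rightarrow> complex mat \<Rightarrow> nat" where
  "mrank d X = vec_space.rank d X"

end

theory Submission
  imports Defs
begin

(* The iterated defects x_k = T^k(d(T)) are positive and telescope: x_0 + ... + x_(m-1) = I - T^m(I) <= I.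
   As A is finite and closed under composition, the powers of T are eventually periodic on M_d, and a
   periodic sequence of positive matrices with bounded partial sums vanishes; so x_n = 0 for some n >= 1.
   For n = n_T let R_k = x_k + ... + x_(n-1), so that Q = supp(R_0).  For positive Y and Z, ran Y <= ran Z
   implies Y <= c Z for some c, hence positive maps preserve inclusions of ranges.  An inclusion
   ran R_k <= ran R_(k+1) would therefore give ran x_(n-1) = ran T^(n-1-k)(R_k) <= ran T^(n-1-k)(R_(k+1))
   = ran R_n = 0.  So the ranges of R_0, ..., R_n strictly decrease inside ran Q, and n <= rank Q <= d. *)

section \<open>Hermitian forms on complex vectors\<close>

lemma mat_adjoint_dim [simp]:
  "dim_row (mat_adjoint A) = dim_col A" "dim_col (mat_adjoint A) = dim_row A"
  unfolding mat_adjoint_def by (auto simp: mat_of_rows_def)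

lemma mat_adjoint_index [simp]:
  "i < dim_col A \<Longrightarrow> j < dim_row A \<Longrightarrow> mat_adjoint A $$ (i, j) = cnj (A $$ (j, i))"
  unfolding mat_adjoint_def by (auto simp: mat_of_rows_def)

lemma hermitian_index:
  assumes "A \<in> carrier_mat n n" "mat_adjoint A = A" "i < n" "j < n"
  shows "A $$ (i, j) = cnj (A $$ (j, i))"
  by (metis assms carrier_matD mat_adjoint_index)

lemma mat_adjoint_add:
  fixes A B :: "complex mat"
  assumes "A \<in> carrier_mat n n" "B \<in> carrier_mat n n"
  shows "mat_adjoint (A + B) = mat_adjoint A + mat_adjoint B"
  using assms by (intro eq_matI) auto

lemma mat_adjoint_minus:
  fixes A B :: "complex mat"
  assumes "A \<in> carrier_mat n n" "B \<in> carrier_mat n n"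
  shows "mat_adjoint (A - B) = mat_adjoint A - mat_adjoint B"
  using assms by (intro eq_matI) auto

lemma mat_adjoint_smult_real:
  "mat_adjoint (complex_of_real c \<cdot>\<^sub>m A) = complex_of_real c \<cdot>\<^sub>m mat_adjoint A"
  by (intro eq_matI) auto

lemma mat_adjoint_zero [simp]: "mat_adjoint (0\<^sub>m n n :: complex mat) = 0\<^sub>m n n"
  by (intro eq_matI) auto

lemma cscalar_prod_sum:
  "u \<in> carrier_vec n \<Longrightarrow> v \<in> carrier_vec n \<Longrightarrow> u \<bullet>c v = (\<Sum>i<n. u $ i * cnj (v $ i))"
  unfolding scalar_prod_def by (auto intro!: sum.cong)

lemma mult_mat_vec_index_sum:
  "A \<in> carrier_mat n n \<Longrightarrow> v \<in> carrier_vec n \<Longrightarrow> i < n \<Longrightarrow> (A *\<^sub>v v) $ i = (\<Sum>j<n. A $$ (i, j) * v $ j)"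
  unfolding mult_mat_vec_def scalar_prod_def by (auto intro!: sum.cong)

lemma cnj_cscalar_prod:
  "u \<in> carrier_vec n \<Longrightarrow> v \<in> carrier_vec n \<Longrightarrow> cnj (u \<bullet>c v) = v \<bullet>c u"
  by (simp add: cscalar_prod_sum mult.commute)

lemma hermitian_cscalar_prod:
  fixes A :: "complex mat"
  assumes A: "A \<in> carrier_mat n n" "mat_adjoint A = A" and u: "u \<in> carrier_vec n" and v: "v \<in> carrier_vec n"
  shows "(A *\<^sub>v u) \<bullet>c v = u \<bullet>c (A *\<^sub>v v)"
proof -
  have Au: "A *\<^sub>v u \<in> carrier_vec n" and Av: "A *\<^sub>v v \<in> carrier_vec n" using A u v by auto
  have "(A *\<^sub>v u) \<bullet>c v = (\<Sum>i<n. \<Sum>j<n. A $$ (i, j) * u $ j * cnj (v $ i))"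
    by (simp add: cscalar_prod_sum[OF Au v] mult_mat_vec_index_sum[OF A(1) u] sum_distrib_right)
  also have "\<dots> = (\<Sum>j<n. \<Sum>i<n. A $$ (i, j) * u $ j * cnj (v $ i))"
    by (rule sum.swap)
  also have "\<dots> = (\<Sum>j<n. u $ j * cnj (\<Sum>i<n. A $$ (j, i) * v $ i))"
    by (auto simp: sum_distrib_left intro!: sum.cong hermitian_index[OF A])
  also have "\<dots> = u \<bullet>c (A *\<^sub>v v)"
    by (simp add: cscalar_prod_sum[OF u Av] mult_mat_vec_index_sum[OF A(1) v])
  finally show ?thesis .
qed

lemma cscalar_prod_self_nonneg:
  "Re ((v :: complex vec) \<bullet>c v) \<ge> 0" "Im ((v :: complex vec) \<bullet>c v) = 0"
  using conjugate_square_ge_0_vec[of v] by (simp_all add: less_eq_complex_def)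

lemma cscalar_prod_self_eq_0:
  "(v :: complex vec) \<in> carrier_vec n \<Longrightarrow> Re (v \<bullet>c v) = 0 \<Longrightarrow> v = 0\<^sub>v n"
  using cscalar_prod_self_nonneg(2)[of v] conjugate_square_eq_0_vec[of v n] by (simp add: complex_eq_iff)

lemma vec_eq_if_diff_eq_0:
  fixes a b :: "complex vec"
  assumes "a \<in> carrier_vec n" "b \<in> carrier_vec n" "a - b = 0\<^sub>v n"
  shows "a = b"
proof (rule eq_vecI)
  fix i assume "i < dim_vec b"
  then have "a $ i - b $ i = (a - b) $ i" using assms(1,2) by simp
  also have "\<dots> = 0" using assms \<open>i < dim_vec b\<close> by simp
  finally show "a $ i = b $ i" by simp
qed (use assms in simp)

lemma vec_eq_if_cscalar_prod_eq:
  fixes a b :: "complex vec"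
  assumes a: "a \<in> carrier_vec n" and b: "b \<in> carrier_vec n"
    and eq: "\<And>u. u \<in> carrier_vec n \<Longrightarrow> a \<bullet>c u = b \<bullet>c u"
  shows "a = b"
proof -
  have ab: "a - b \<in> carrier_vec n" using a b by auto
  have "(a - b) \<bullet>c (a - b) = a \<bullet>c (a - b) - b \<bullet>c (a - b)"
    using a b by (simp add: minus_scalar_prod_distrib[of _ n])
  then have "a - b = 0\<^sub>v n" using eq[OF ab] cscalar_prod_self_eq_0[OF ab] by simp
  then show ?thesis by (rule vec_eq_if_diff_eq_0[OF a b])
qed

lemma mat_eq_if_mult_vec_eq:
  fixes A B :: "complex mat"
  assumes "A \<in> carrier_mat n n" "B \<in> carrier_mat n n"
    and "\<And>v. v \<in> carrier_vec n \<Longrightarrow> A *\<^sub>v v = B *\<^sub>v v"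
  shows "A = B"
proof (rule eq_matI)
  fix i j assume "i < dim_row B" "j < dim_col B"
  then have "i < n" "j < n" using assms(2) by auto
  then have "A $$ (i, j) = (A *\<^sub>v unit_vec n j) $ i" "B $$ (i, j) = (B *\<^sub>v unit_vec n j) $ i"
    using assms(1,2) by simp_all
  then show "A $$ (i, j) = B $$ (i, j)" using assms(3)[of "unit_vec n j"] by simp
qed (use assms in auto)

lemma mult_zero_mat_vec [simp]: "v \<in> carrier_vec m \<Longrightarrow> 0\<^sub>m n m *\<^sub>v v = (0\<^sub>v n :: complex vec)"
  by (rule eq_vecI) (auto simp: scalar_prod_def)

lemma mult_mat_vec_zero [simp]: "X \<in> carrier_mat n m \<Longrightarrow> X *\<^sub>v 0\<^sub>v m = (0\<^sub>v n :: complex vec)"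
  by (rule eq_vecI) (auto simp: scalar_prod_def)

lemma smult_zero_vec [simp]: "c \<cdot>\<^sub>v 0\<^sub>v n = (0\<^sub>v n :: complex vec)"
  by (rule eq_vecI) auto

lemma smult_mat_mult_vec:
  "A \<in> carrier_mat n m \<Longrightarrow> v \<in> carrier_vec m \<Longrightarrow> (c \<cdot>\<^sub>m A) *\<^sub>v v = c \<cdot>\<^sub>v (A *\<^sub>v v :: complex vec)"
  by (rule eq_vecI) (auto simp: scalar_prod_def sum_distrib_left algebra_simps)

section \<open>Positive semidefinite matrices\<close>

definition qform :: "complex mat \<Rightarrow> complex vec \<Rightarrow> complex" where
  "qform A v = (A *\<^sub>v v) \<bullet>c v"

lemma cscalar_prod_add_smult:
  fixes a b u w :: "complex vec"
  assumes "a \<in> carrier_vec n" "b \<in> carrier_vec n" "u \<in> carrier_vec n" "w \<in> carrier_vec n"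
  shows "(a + c \<cdot>\<^sub>v b) \<bullet>c (u + c \<cdot>\<^sub>v w) =
    a \<bullet>c u + cnj c * (a \<bullet>c w) + c * (b \<bullet>c u) + c * cnj c * (b \<bullet>c w)"
proof -
  have ab: "a + c \<cdot>\<^sub>v b \<in> carrier_vec n" and uw: "u + c \<cdot>\<^sub>v w \<in> carrier_vec n"
    using assms by auto
  have "(a + c \<cdot>\<^sub>v b) \<bullet>c (u + c \<cdot>\<^sub>v w) = (\<Sum>i<n. (a$i + c * b$i) * cnj (u$i + c * w$i))"
    using assms by (simp add: cscalar_prod_sum[OF ab uw])
  also have "\<dots> = (\<Sum>i<n. a$i * cnj (u$i)) + cnj c * (\<Sum>i<n. a$i * cnj (w$i))
      + c * (\<Sum>i<n. b$i * cnj (u$i)) + c * cnj c * (\<Sum>i<n. b$i * cnj (w$i))"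
    by (simp add: sum.distrib sum_distrib_left algebra_simps)
  finally show ?thesis using assms by (simp add: cscalar_prod_sum)
qed

lemma qform_add_smult:
  assumes A: "A \<in> carrier_mat n n" and u: "u \<in> carrier_vec n" and w: "w \<in> carrier_vec n"
  shows "qform A (u + c \<cdot>\<^sub>v w) =
    qform A u + cnj c * ((A *\<^sub>v u) \<bullet>c w) + c * ((A *\<^sub>v w) \<bullet>c u) + c * cnj c * qform A w"
proof -
  have "A *\<^sub>v (u + c \<cdot>\<^sub>v w) = A *\<^sub>v u + c \<cdot>\<^sub>v (A *\<^sub>v w)"
    using A u w by (simp add: mult_add_distrib_mat_vec mult_mat_vec)
  then show ?thesis unfolding qform_def using A u w by (simp add: cscalar_prod_add_smult[of _ n])
qed

lemma qform_add:
  "A \<in> carrier_mat n n \<Longrightarrow> B \<in> carrier_mat n n \<Longrightarrow> v \<in> carrier_vec n \<Longrightarrow>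
    qform (A + B) v = qform A v + qform B v"
  unfolding qform_def by (simp add: add_mult_distrib_mat_vec[of _ n n] add_scalar_prod_distrib[of _ n])

lemma qform_diff:
  "A \<in> carrier_mat n n \<Longrightarrow> B \<in> carrier_mat n n \<Longrightarrow> v \<in> carrier_vec n \<Longrightarrow>
    qform (A - B) v = qform A v - qform B v"
  unfolding qform_def by (simp add: minus_mult_distrib_mat_vec[of _ n n] minus_scalar_prod_distrib[of _ n])

lemma qform_smult: "A \<in> carrier_mat n n \<Longrightarrow> v \<in> carrier_vec n \<Longrightarrow> qform (c \<cdot>\<^sub>m A) v = c * qform A v"
  unfolding qform_def by (simp add: smult_mat_mult_vec smult_scalar_prod_distrib[of _ n])

lemma qform_zero [simp]: "v \<in> carrier_vec n \<Longrightarrow> qform (0\<^sub>m n n) v = 0"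
  unfolding qform_def by simp

lemma qform_one [simp]: "v \<in> carrier_vec n \<Longrightarrow> qform (1\<^sub>m n) v = v \<bullet>c v"
  unfolding qform_def by simp

lemma psd_carrier: "psd n A \<Longrightarrow> A \<in> carrier_mat n n"
  unfolding psd_def by auto

lemma psd_hermitian: "psd n A \<Longrightarrow> mat_adjoint A = A"
  unfolding psd_def by auto

lemma psd_qform_nonneg: "psd n A \<Longrightarrow> v \<in> carrier_vec n \<Longrightarrow> Re (qform A v) \<ge> 0"
  unfolding psd_def qform_def by auto

lemma psdI:
  "A \<in> carrier_mat n n \<Longrightarrow> mat_adjoint A = A \<Longrightarrow> (\<And>v. v \<in> carrier_vec n \<Longrightarrow> Re (qform A v) \<ge> 0) \<Longrightarrow>
    psd n A"
  unfolding psd_def qform_def by auto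

lemma psd_zero: "psd n (0\<^sub>m n n)"
  by (rule psdI) auto

lemma psd_one: "psd n (1\<^sub>m n)"
  by (rule psdI) (auto simp: cscalar_prod_self_nonneg)

lemma psd_add:
  assumes A: "psd n A" and B: "psd n B"
  shows "psd n (A + B)"
proof (rule psdI)
  show "A + B \<in> carrier_mat n n" using psd_carrier[OF A] psd_carrier[OF B] by simp
  show "mat_adjoint (A + B) = A + B"
    using mat_adjoint_add[OF psd_carrier[OF A] psd_carrier[OF B]] psd_hermitian[OF A] psd_hermitian[OF B]
    by simp
  fix v :: "complex vec" assume "v \<in> carrier_vec n"
  then show "0 \<le> Re (qform (A + B) v)"
    using qform_add[OF psd_carrier[OF A] psd_carrier[OF B]] psd_qform_nonneg[OF A] psd_qform_nonneg[OF B]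
    by simp
qed

lemma psd_diff:
  assumes "A \<in> carrier_mat n n" "B \<in> carrier_mat n n" "mat_adjoint A = A" "mat_adjoint B = B"
    and "\<And>v. v \<in> carrier_vec n \<Longrightarrow> Re (qform B v) \<le> Re (qform A v)"
  shows "psd n (A - B)"
  using assms by (intro psdI) (auto simp: mat_adjoint_minus qform_diff)

lemma psd_smult_diff:
  assumes "A \<in> carrier_mat n n" "B \<in> carrier_mat n n" "mat_adjoint A = A" "mat_adjoint B = B"
    and "\<And>v. v \<in> carrier_vec n \<Longrightarrow> Re (qform B v) \<le> c * Re (qform A v)"
  shows "psd n (complex_of_real c \<cdot>\<^sub>m A - B)"
  using assms by (intro psd_diff) (auto simp: mat_adjoint_smult_real qform_smult)

lemma psd_mult_vec_eq_0_if_qform_eq_0: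
  assumes psd: "psd n A" and u: "u \<in> carrier_vec n" and z: "Re (qform A u) = 0"
  shows "A *\<^sub>v u = 0\<^sub>v n"
proof -
  have A: "A \<in> carrier_mat n n" and h: "mat_adjoint A = A" using psd by (auto simp: psd_def)
  define w where "w = A *\<^sub>v u"
  have w: "w \<in> carrier_vec n" unfolding w_def using A u by auto
  define b where "b = Re (w \<bullet>c w)"
  define a where "a = Re (qform A w)"
  have b0: "b \<ge> 0" unfolding b_def by (simp add: cscalar_prod_self_nonneg)
  have a0: "a \<ge> 0" unfolding a_def using psd_qform_nonneg[OF psd w] .
  have e: "(A *\<^sub>v u) \<bullet>c w = w \<bullet>c w" "(A *\<^sub>v w) \<bullet>c u = w \<bullet>c w"
    using hermitian_cscalar_prod[OF A h w u] by (simp_all add: w_def)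
  \<comment> \<open>Re (qform A (u + t w)) is a nonnegative quadratic in t vanishing at t = 0, so b = 0\<close>
  have key: "0 \<le> 2 * t * b + t * t * a" for t :: real
  proof -
    have "0 \<le> Re (qform A (u + complex_of_real t \<cdot>\<^sub>v w))"
      using psd_qform_nonneg[OF psd] u w by auto
    also have "\<dots> = 2 * t * b + t * t * a"
      unfolding qform_add_smult[OF A u w] e using z unfolding a_def b_def by simp
    finally show ?thesis .
  qed
  have "b = 0"
  proof (rule ccontr)
    assume "b \<noteq> 0"
    with b0 have bp: "b > 0" by simp
    define s where "s = b / (a + 1)"
    have sp: "s > 0" and sa: "s * a \<le> b" unfolding s_def using bp a0 by (simp_all add: field_simps)
    have "0 \<le> 2 * (- s) * b + (- s) * (- s) * a" by (rule key)
    also have "\<dots> = s * (s * a - 2 * b)" by (simp add: algebra_simps)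
    also have "\<dots> < 0" using sa sp bp by (simp add: mult_pos_neg)
    finally show False by simp
  qed
  then show ?thesis using cscalar_prod_self_eq_0[OF w] unfolding b_def w_def by simp
qed

lemma psd_eq_0_if_qform_nonpos:
  assumes psd: "psd n A" and nonpos: "\<And>v. v \<in> carrier_vec n \<Longrightarrow> Re (qform A v) \<le> 0"
  shows "A = 0\<^sub>m n n"
proof (rule mat_eq_if_mult_vec_eq[OF psd_carrier[OF psd]])
  fix v :: "complex vec" assume v: "v \<in> carrier_vec n"
  have "Re (qform A v) = 0" using nonpos[OF v] psd_qform_nonneg[OF psd v] by simp
  then show "A *\<^sub>v v = 0\<^sub>m n n *\<^sub>v v" using psd_mult_vec_eq_0_if_qform_eq_0[OF psd v] v by simp
qed simp

section \<open>Positive maps\<close>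

lemma lin_map_carrier: "lin_map d T \<Longrightarrow> X \<in> carrier_mat d d \<Longrightarrow> T X \<in> carrier_mat d d"
  unfolding lin_map_def by auto

lemma lin_map_add:
  "lin_map d T \<Longrightarrow> X \<in> carrier_mat d d \<Longrightarrow> Y \<in> carrier_mat d d \<Longrightarrow> T (X + Y) = T X + T Y"
  unfolding lin_map_def by auto

lemma lin_map_smult: "lin_map d T \<Longrightarrow> X \<in> carrier_mat d d \<Longrightarrow> T (c \<cdot>\<^sub>m X) = c \<cdot>\<^sub>m T X"
  unfolding lin_map_def by auto

lemma lin_map_zero:
  assumes T: "lin_map d T"
  shows "T (0\<^sub>m d d) = 0\<^sub>m d d"
proof -
  have "T (0\<^sub>m d d) = T (0 \<cdot>\<^sub>m 0\<^sub>m d d)" by (metis smult_zero_mat)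
  also have "\<dots> = 0 \<cdot>\<^sub>m T (0\<^sub>m d d)" by (rule lin_map_smult[OF T]) simp
  also have "\<dots> = 0\<^sub>m d d" using lin_map_carrier[OF T, of "0\<^sub>m d d"] by (intro eq_matI) auto
  finally show ?thesis .
qed

lemma lin_map_diff:
  assumes T: "lin_map d T" and X: "X \<in> carrier_mat d d" and Y: "Y \<in> carrier_mat d d"
  shows "T (X - Y) = T X - T Y"
proof -
  have "X - Y = X + (-1) \<cdot>\<^sub>m Y" using X Y by (intro eq_matI) auto
  then have "T (X - Y) = T X + (-1) \<cdot>\<^sub>m T Y" using lin_map_add[OF T X] lin_map_smult[OF T Y] Y by simp
  also have "\<dots> = T X - T Y" using lin_map_carrier[OF T X] lin_map_carrier[OF T Y] by (intro eq_matI) auto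
  finally show ?thesis .
qed

lemma lin_map_funpow: "lin_map d T \<Longrightarrow> lin_map d (T ^^ k)"
  by (induction k) (auto simp: lin_map_def)

lemma positive_map_lin_map: "positive_map d T \<Longrightarrow> lin_map d T"
  unfolding positive_map_def by auto

lemma positive_map_psd: "positive_map d T \<Longrightarrow> psd d X \<Longrightarrow> psd d (T X)"
  unfolding positive_map_def by auto

lemma positive_map_funpow: "positive_map d T \<Longrightarrow> positive_map d (T ^^ k)"
proof (induction k)
  case (Suc k)
  then show ?case
    using lin_map_funpow[OF positive_map_lin_map[OF Suc.prems], of "Suc k"] positive_map_psd[OF Suc.prems]
    by (auto simp: positive_map_def comp_def)
qed (auto simp: positive_map_def lin_map_def)

fun mat_sum :: "nat \<Rightarrow> (nat \<Rightarrow> complex mat) \<Rightarrow> nat \<Rightarrow> complex mat" where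
  "mat_sum d f 0 = 0\<^sub>m d d"
| "mat_sum d f (Suc m) = mat_sum d f m + f m"

lemma mat_sum_carrier: "(\<And>i. i < m \<Longrightarrow> f i \<in> carrier_mat d d) \<Longrightarrow> mat_sum d f m \<in> carrier_mat d d"
  by (induction m) auto

lemma psd_mat_sum: "(\<And>i. i < m \<Longrightarrow> psd d (f i)) \<Longrightarrow> psd d (mat_sum d f m)"
  by (induction m) (auto simp: psd_zero psd_add)

lemma qform_mat_sum:
  "(\<And>i. i < m \<Longrightarrow> f i \<in> carrier_mat d d) \<Longrightarrow> v \<in> carrier_vec d \<Longrightarrow>
    qform (mat_sum d f m) v = (\<Sum>i<m. qform (f i) v)"
proof (induction m)
  case (Suc m)
  have "mat_sum d f m \<in> carrier_mat d d" "f m \<in> carrier_mat d d"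
    using Suc.prems by (auto intro!: mat_sum_carrier)
  then show ?case using qform_add[OF _ _ Suc.prems(2)] Suc by simp
qed simp

lemma lin_map_mat_sum:
  "lin_map d T \<Longrightarrow> (\<And>i. i < m \<Longrightarrow> f i \<in> carrier_mat d d) \<Longrightarrow>
    T (mat_sum d f m) = mat_sum d (\<lambda>i. T (f i)) m"
  by (induction m) (auto simp: lin_map_zero lin_map_add mat_sum_carrier)

lemma mat_sum_eq_0: "(\<And>i. i < m \<Longrightarrow> f i = 0\<^sub>m d d) \<Longrightarrow> mat_sum d f m = 0\<^sub>m d d"
  by (induction m) auto

lemma mat_sum_Suc_shift:
  "(\<And>i. i \<le> m \<Longrightarrow> f i \<in> carrier_mat d d) \<Longrightarrow>
    mat_sum d f (Suc m) = f 0 + mat_sum d (\<lambda>i. f (Suc i)) m"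
proof (induction m)
  case (Suc m)
  have c: "f 0 \<in> carrier_mat d d" "mat_sum d (\<lambda>i. f (Suc i)) m \<in> carrier_mat d d"
    "f (Suc m) \<in> carrier_mat d d"
    using Suc.prems by (auto intro!: mat_sum_carrier)
  have "mat_sum d f (Suc (Suc m)) = (f 0 + mat_sum d (\<lambda>i. f (Suc i)) m) + f (Suc m)"
    using Suc by simp
  also have "\<dots> = f 0 + (mat_sum d (\<lambda>i. f (Suc i)) m + f (Suc m))"
    using c by simp
  finally show ?case by simp
qed auto

lemma psd_mat_sum_minus_term:
  assumes f: "\<And>i. i < m \<Longrightarrow> psd d (f i)" and k: "k < m"
  shows "psd d (mat_sum d f m - f k)"
proof (rule psd_diff)
  have fc: "\<And>i. i < m \<Longrightarrow> f i \<in> carrier_mat d d" using f psd_carrier by blast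
  show "mat_sum d f m \<in> carrier_mat d d" "f k \<in> carrier_mat d d" using mat_sum_carrier fc k by auto
  show "mat_adjoint (mat_sum d f m) = mat_sum d f m" "mat_adjoint (f k) = f k"
    using psd_hermitian[OF psd_mat_sum[OF f]] psd_hermitian[OF f[OF k]] by simp_all
  fix v :: "complex vec" assume v: "v \<in> carrier_vec d"
  have "Re (qform (f k) v) \<le> (\<Sum>i<m. Re (qform (f i) v))"
    using member_le_sum[of k "{..<m}" "\<lambda>i. Re (qform (f i) v)"] k psd_qform_nonneg[OF f v] by auto
  then show "Re (qform (f k) v) \<le> Re (qform (mat_sum d f m) v)"
    using qform_mat_sum[OF fc v] by simp
qed

section \<open>Orthogonal projections and supports\<close>

lemma is_proj_carrier: "is_proj d P \<Longrightarrow> P \<in> carrier_mat d d"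
  unfolding is_proj_def by auto

lemma is_proj_hermitian: "is_proj d P \<Longrightarrow> mat_adjoint P = P"
  unfolding is_proj_def by auto

lemma is_proj_mult_vec_idem: "is_proj d P \<Longrightarrow> v \<in> carrier_vec d \<Longrightarrow> P *\<^sub>v (P *\<^sub>v v) = P *\<^sub>v v"
  unfolding is_proj_def using assoc_mult_mat_vec[of P d d P d v] by auto

lemma is_projI:
  assumes P: "P \<in> carrier_mat d d" "mat_adjoint P = P"
    and idem: "\<And>w. w \<in> carrier_vec d \<Longrightarrow> P *\<^sub>v (P *\<^sub>v w) = P *\<^sub>v w"
  shows "is_proj d P"
proof -
  have "P * P = P"
    using P idem by (intro mat_eq_if_mult_vec_eq[of _ d]) (auto simp: assoc_mult_mat_vec[of _ d d])
  then show ?thesis unfolding is_proj_def using P by simp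
qed

lemma mult_vec_in_mat_range: "v \<in> carrier_vec d \<Longrightarrow> X *\<^sub>v v \<in> mat_range d X"
  unfolding mat_range_def by auto

lemma mat_range_carrier: "X \<in> carrier_mat d d \<Longrightarrow> a \<in> mat_range d X \<Longrightarrow> a \<in> carrier_vec d"
  unfolding mat_range_def by auto

lemma mat_range_add_smult:
  assumes X: "X \<in> carrier_mat d d" and a: "a \<in> mat_range d X" and b: "b \<in> mat_range d X"
  shows "a + c \<cdot>\<^sub>v b \<in> mat_range d X"
proof -
  obtain v w where vw: "v \<in> carrier_vec d" "w \<in> carrier_vec d" "a = X *\<^sub>v v" "b = X *\<^sub>v w"
    using a b unfolding mat_range_def by auto
  then have "a + c \<cdot>\<^sub>v b = X *\<^sub>v (v + c \<cdot>\<^sub>v w)"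
    using X by (simp add: mult_add_distrib_mat_vec mult_mat_vec)
  then show ?thesis using vw by (simp add: mult_vec_in_mat_range)
qed

lemma mat_range_zero_mat: "mat_range d (0\<^sub>m d d) = {0\<^sub>v d :: complex vec}"
proof (intro equalityI subsetI)
  fix y :: "complex vec" assume "y \<in> mat_range d (0\<^sub>m d d)"
  then show "y \<in> {0\<^sub>v d}" unfolding mat_range_def by auto
next
  fix y :: "complex vec" assume "y \<in> {0\<^sub>v d}"
  then have "y = 0\<^sub>m d d *\<^sub>v 0\<^sub>v d" by simp
  then show "y \<in> mat_range d (0\<^sub>m d d)" using mult_vec_in_mat_range[of "0\<^sub>v d" d "0\<^sub>m d d"] by simp
qed

lemma mat_eq_0_if_mat_range_subset:
  "X \<in> carrier_mat d d \<Longrightarrow> mat_range d X \<subseteq> {0\<^sub>v d} \<Longrightarrow> X = (0\<^sub>m d d :: complex mat)"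
  by (rule mat_eq_if_mult_vec_eq[of _ d]) (auto simp: mat_range_def)

lemma mat_range_proj:
  assumes P: "is_proj d P"
  shows "w \<in> mat_range d P \<longleftrightarrow> w \<in> carrier_vec d \<and> P *\<^sub>v w = w"
proof
  assume "w \<in> mat_range d P"
  then obtain v where "v \<in> carrier_vec d" "w = P *\<^sub>v v" unfolding mat_range_def by auto
  then show "w \<in> carrier_vec d \<and> P *\<^sub>v w = w"
    using is_proj_mult_vec_idem[OF P] is_proj_carrier[OF P] by auto
next
  assume "w \<in> carrier_vec d \<and> P *\<^sub>v w = w"
  then show "w \<in> mat_range d P" using mult_vec_in_mat_range[of w d P] by simp
qed

lemma qform_proj:
  assumes P: "is_proj d P" and v: "v \<in> carrier_vec d"
  shows "qform P v = (P *\<^sub>v v) \<bullet>c (P *\<^sub>v v)"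
proof -
  have "qform P v = (P *\<^sub>v (P *\<^sub>v v)) \<bullet>c v"
    unfolding qform_def using is_proj_mult_vec_idem[OF P v] by simp
  also have "\<dots> = (P *\<^sub>v v) \<bullet>c (P *\<^sub>v v)"
    using hermitian_cscalar_prod[OF is_proj_carrier[OF P] is_proj_hermitian[OF P] _ v] is_proj_carrier[OF P] v
    by simp
  finally show ?thesis .
qed

lemma cscalar_prod_proj_complement:
  assumes P: "is_proj d P" and w: "w \<in> carrier_vec d"
  shows "(w - P *\<^sub>v w) \<bullet>c (w - P *\<^sub>v w) = w \<bullet>c w - qform P w"
proof -
  have Pw: "P *\<^sub>v w \<in> carrier_vec d" using is_proj_carrier[OF P] w by simp
  have "w \<bullet>c (P *\<^sub>v w) = cnj (qform P w)"
    unfolding qform_def using cnj_cscalar_prod[OF Pw w] by simp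
  also have "\<dots> = qform P w"
    using cscalar_prod_self_nonneg(2)[of "P *\<^sub>v w"] qform_proj[OF P w] by (simp add: complex_eq_iff)
  finally have "w \<bullet>c (P *\<^sub>v w) = qform P w" .
  moreover have "w - P *\<^sub>v w = w + (-1) \<cdot>\<^sub>v (P *\<^sub>v w)" using w Pw by (intro eq_vecI) auto
  ultimately show ?thesis
    using cscalar_prod_add_smult[OF w Pw w Pw, of "-1"] qform_proj[OF P w] unfolding qform_def by simp
qed

lemma qform_proj_le: "is_proj d P \<Longrightarrow> w \<in> carrier_vec d \<Longrightarrow> Re (qform P w) \<le> Re (w \<bullet>c w)"
  using cscalar_prod_proj_complement[of d P w] cscalar_prod_self_nonneg(1)[of "w - P *\<^sub>v w"] by simp

lemma hermitian_fixes_range_iff: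
  fixes A B :: "complex mat"
  assumes A: "A \<in> carrier_mat n n" "mat_adjoint A = A" and B: "B \<in> carrier_mat n n" "mat_adjoint B = B"
  shows "(\<forall>w \<in> carrier_vec n. B *\<^sub>v (A *\<^sub>v w) = A *\<^sub>v w) \<longleftrightarrow> (\<forall>w \<in> carrier_vec n. A *\<^sub>v (B *\<^sub>v w) = A *\<^sub>v w)"
proof -
  have swap: "(Y *\<^sub>v (X *\<^sub>v w)) \<bullet>c u = w \<bullet>c (X *\<^sub>v (Y *\<^sub>v u))"
    if "X \<in> {A, B}" "Y \<in> {A, B}" "w \<in> carrier_vec n" "u \<in> carrier_vec n" for X Y w u
    using that A B hermitian_cscalar_prod[of Y n "X *\<^sub>v w" u] hermitian_cscalar_prod[of X n w "Y *\<^sub>v u"]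
    by auto
  have herm: "(X *\<^sub>v w) \<bullet>c u = w \<bullet>c (X *\<^sub>v u)" if "X \<in> {A, B}" "w \<in> carrier_vec n" "u \<in> carrier_vec n" for X w u
    using that A B hermitian_cscalar_prod by auto
  show ?thesis
  proof (intro iffI ballI)
    fix w :: "complex vec" assume h: "\<forall>w \<in> carrier_vec n. B *\<^sub>v (A *\<^sub>v w) = A *\<^sub>v w" and w: "w \<in> carrier_vec n"
    show "A *\<^sub>v (B *\<^sub>v w) = A *\<^sub>v w"
      using A B w swap[of B A w] h herm[of A w] by (intro vec_eq_if_cscalar_prod_eq[of _ n]) auto
  next
    fix w :: "complex vec" assume h: "\<forall>w \<in> carrier_vec n. A *\<^sub>v (B *\<^sub>v w) = A *\<^sub>v w" and w: "w \<in> carrier_vec n"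
    show "B *\<^sub>v (A *\<^sub>v w) = A *\<^sub>v w"
      using A B w swap[of A B w] h herm[of A w] by (intro vec_eq_if_cscalar_prod_eq[of _ n]) auto
  qed
qed

lemma proj_fixes_mat_range:
  assumes P: "is_proj d P" and X: "X \<in> carrier_mat d d" "mat_adjoint X = X"
    and sub: "mat_range d X \<subseteq> mat_range d P" and w: "w \<in> carrier_vec d"
  shows "P *\<^sub>v (X *\<^sub>v w) = X *\<^sub>v w" and "X *\<^sub>v (P *\<^sub>v w) = X *\<^sub>v w"
proof -
  have fix_P: "\<forall>u \<in> carrier_vec d. P *\<^sub>v (X *\<^sub>v u) = X *\<^sub>v u"
    using sub mat_range_proj[OF P] by (auto simp: mult_vec_in_mat_range subset_iff)
  then show "P *\<^sub>v (X *\<^sub>v w) = X *\<^sub>v w" using w by blast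
  show "X *\<^sub>v (P *\<^sub>v w) = X *\<^sub>v w"
    using fix_P hermitian_fixes_range_iff[OF X is_proj_carrier[OF P] is_proj_hermitian[OF P]] w by blast
qed

lemma proj_eq_if_mat_range_eq:
  assumes P: "is_proj d P" and R: "is_proj d R" and eq: "mat_range d P = mat_range d R"
  shows "P = R"
proof (rule mat_eq_if_mult_vec_eq[OF is_proj_carrier[OF P] is_proj_carrier[OF R]])
  fix v :: "complex vec" assume v: "v \<in> carrier_vec d"
  have "P *\<^sub>v v = R *\<^sub>v (P *\<^sub>v v)"
    using proj_fixes_mat_range(1)[OF R is_proj_carrier[OF P] is_proj_hermitian[OF P] _ v] eq by simp
  also have "\<dots> = R *\<^sub>v v"
    using proj_fixes_mat_range(2)[OF P is_proj_carrier[OF R] is_proj_hermitian[OF R] _ v] eq by simp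
  finally show "P *\<^sub>v v = R *\<^sub>v v" .
qed

lemma proj_le_iff_mat_range_subset:
  assumes P: "is_proj d P" and R: "is_proj d R"
  shows "loewner_le d P R \<longleftrightarrow> mat_range d P \<subseteq> mat_range d R"
proof
  assume le: "loewner_le d P R"
  show "mat_range d P \<subseteq> mat_range d R"
  proof
    fix w assume "w \<in> mat_range d P"
    then have w: "w \<in> carrier_vec d" and Pw: "P *\<^sub>v w = w" using mat_range_proj[OF P] by auto
    have "Re (w \<bullet>c w) = Re (qform P w)" unfolding qform_def Pw ..
    also have "\<dots> \<le> Re (qform R w)"
      using psd_qform_nonneg[of d "R - P" w] le w is_proj_carrier[OF P] is_proj_carrier[OF R]
      by (simp add: loewner_le_def qform_diff)
    finally have "Re ((w - R *\<^sub>v w) \<bullet>c (w - R *\<^sub>v w)) \<le> 0"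
      using cscalar_prod_proj_complement[OF R w] by simp
    then have "Re ((w - R *\<^sub>v w) \<bullet>c (w - R *\<^sub>v w)) = 0"
      using cscalar_prod_self_nonneg(1)[of "w - R *\<^sub>v w"] by linarith
    moreover have Rw: "R *\<^sub>v w \<in> carrier_vec d" using w is_proj_carrier[OF R] by simp
    ultimately have "w - R *\<^sub>v w = 0\<^sub>v d" using cscalar_prod_self_eq_0[of _ d] w by simp
    then have "R *\<^sub>v w = w" using vec_eq_if_diff_eq_0[OF w Rw] by simp
    then show "w \<in> mat_range d R" using mat_range_proj[OF R] w by simp
  qed
next
  assume sub: "mat_range d P \<subseteq> mat_range d R"
  have Pc: "P \<in> carrier_mat d d" and Rc: "R \<in> carrier_mat d d" using P R by (simp_all add: is_proj_carrier)
  have "psd d (R - P)"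
  proof (rule psd_diff[OF Rc Pc is_proj_hermitian[OF R] is_proj_hermitian[OF P]])
    fix v :: "complex vec" assume v: "v \<in> carrier_vec d"
    have Rv: "R *\<^sub>v v \<in> carrier_vec d" using Rc v by simp
    have "qform P v = qform P (R *\<^sub>v v)"
      using qform_proj[OF P v] qform_proj[OF P Rv]
        proj_fixes_mat_range(2)[OF R Pc is_proj_hermitian[OF P] sub v] by simp
    also have "Re \<dots> \<le> Re ((R *\<^sub>v v) \<bullet>c (R *\<^sub>v v))" by (rule qform_proj_le[OF P Rv])
    also have "\<dots> = Re (qform R v)" using qform_proj[OF R v] by simp
    finally show "Re (qform P v) \<le> Re (qform R v)" .
  qed
  then show "loewner_le d P R" unfolding loewner_le_def using Pc Rc by simp
qed

definition line_proj :: "nat \<Rightarrow> complex vec \<Rightarrow> complex mat" where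
  "line_proj n u = mat n n (\<lambda>(i, j). u $ i * cnj (u $ j) / (u \<bullet>c u))"

lemma line_proj_carrier [simp]: "line_proj n u \<in> carrier_mat n n"
  unfolding line_proj_def by auto

lemma line_proj_mult_vec:
  assumes u: "u \<in> carrier_vec n" and w: "w \<in> carrier_vec n"
  shows "line_proj n u *\<^sub>v w = ((w \<bullet>c u) / (u \<bullet>c u)) \<cdot>\<^sub>v u"
proof (rule eq_vecI)
  fix i assume "i < dim_vec (((w \<bullet>c u) / (u \<bullet>c u)) \<cdot>\<^sub>v u)"
  then have i: "i < n" using u by auto
  have "(line_proj n u *\<^sub>v w) $ i = (\<Sum>j<n. u $ i * cnj (u $ j) / (u \<bullet>c u) * w $ j)"
    using mult_mat_vec_index_sum[OF line_proj_carrier w i] i by (simp add: line_proj_def)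
  also have "\<dots> = u $ i * (\<Sum>j<n. w $ j * cnj (u $ j)) / (u \<bullet>c u)"
    by (simp add: sum_distrib_left sum_divide_distrib algebra_simps)
  also have "\<dots> = (((w \<bullet>c u) / (u \<bullet>c u)) \<cdot>\<^sub>v u) $ i"
    using cscalar_prod_sum[OF w u] i u by simp
  finally show "(line_proj n u *\<^sub>v w) $ i = (((w \<bullet>c u) / (u \<bullet>c u)) \<cdot>\<^sub>v u) $ i" .
qed (use u in \<open>auto simp: line_proj_def\<close>)

lemma line_proj_hermitian:
  assumes u: "u \<in> carrier_vec n"
  shows "mat_adjoint (line_proj n u) = line_proj n u"
proof -
  have "cnj (u \<bullet>c u) = u \<bullet>c u" using cnj_cscalar_prod[OF u u] .
  then show ?thesis by (intro eq_matI) (auto simp: line_proj_def)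
qed

lemma proj_add_line_proj:
  assumes P: "is_proj d P" and u: "u \<in> carrier_vec d" and Pu: "P *\<^sub>v u = 0\<^sub>v d" and u0: "u \<noteq> 0\<^sub>v d"
  shows "is_proj d (P + line_proj d u)"
    and "mat_range d (P + line_proj d u) = {a + c \<cdot>\<^sub>v u | a c. a \<in> mat_range d P}"
proof -
  have Pc: "P \<in> carrier_mat d d" using is_proj_carrier[OF P] .
  let ?P' = "P + line_proj d u" and ?S = "{a + c \<cdot>\<^sub>v u | a c. a \<in> mat_range d P}"
  have P'c: "?P' \<in> carrier_mat d d" using Pc by simp
  have uu: "u \<bullet>c u \<noteq> 0" using u0 conjugate_square_eq_0_vec[OF u] by simp
  have P'w: "?P' *\<^sub>v w = P *\<^sub>v w + ((w \<bullet>c u) / (u \<bullet>c u)) \<cdot>\<^sub>v u" if w: "w \<in> carrier_vec d" for w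
    using add_mult_distrib_mat_vec[OF Pc line_proj_carrier w] line_proj_mult_vec[OF u w] by simp
  have orth: "a \<bullet>c u = 0" if a: "a \<in> mat_range d P" for a
  proof -
    have ac: "a \<in> carrier_vec d" and Pa: "P *\<^sub>v a = a" using mat_range_proj[OF P] a by auto
    have "a \<bullet>c u = a \<bullet>c (P *\<^sub>v u)"
      using hermitian_cscalar_prod[OF Pc is_proj_hermitian[OF P] ac u] Pa by simp
    then show ?thesis using Pu ac by simp
  qed
  have fixes_S: "?P' *\<^sub>v y = y" if y: "y \<in> ?S" for y
  proof -
    obtain a c where a: "a \<in> mat_range d P" and y: "y = a + c \<cdot>\<^sub>v u" using y by auto
    have ac: "a \<in> carrier_vec d" and Pa: "P *\<^sub>v a = a" using mat_range_proj[OF P] a by auto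
    have "P *\<^sub>v y = a" unfolding y using ac u Pc Pa Pu by (simp add: mult_add_distrib_mat_vec mult_mat_vec)
    moreover have "y \<bullet>c u = c * (u \<bullet>c u)"
      unfolding y using ac u orth[OF a] by (simp add: add_scalar_prod_distrib[of _ d])
    ultimately show ?thesis using P'w[of y] ac u uu unfolding y by simp
  qed
  have into_S: "?P' *\<^sub>v w \<in> ?S" if w: "w \<in> carrier_vec d" for w
    using P'w[OF w] mult_vec_in_mat_range[OF w, of P] by blast
  show "is_proj d ?P'"
  proof (rule is_projI[OF P'c])
    show "mat_adjoint ?P' = ?P'"
      using mat_adjoint_add[OF Pc line_proj_carrier] is_proj_hermitian[OF P] line_proj_hermitian[OF u] by simp
  qed (use fixes_S into_S in blast)
  show "mat_range d ?P' = ?S"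
  proof (intro equalityI subsetI)
    fix y assume "y \<in> mat_range d ?P'"
    then show "y \<in> ?S" using into_S unfolding mat_range_def by auto
  next
    fix y assume y: "y \<in> ?S"
    then have "y \<in> carrier_vec d" using u mat_range_carrier[OF Pc] by auto
    then show "y \<in> mat_range d ?P'" using mult_vec_in_mat_range[of y d ?P'] fixes_S[OF y] by simp
  qed
qed

lemma proj_add_orthogonal_line:
  assumes P: "is_proj d P" and u: "u \<in> carrier_vec d" and Pu: "P *\<^sub>v u = 0\<^sub>v d"
  shows "\<exists>P'. is_proj d P' \<and> mat_range d P' = {a + c \<cdot>\<^sub>v u | a c. a \<in> mat_range d P}"
proof (cases "u = 0\<^sub>v d")
  case True
  have triv: "a + c \<cdot>\<^sub>v u = a" if "a \<in> mat_range d P" for a c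
    using True mat_range_carrier[OF is_proj_carrier[OF P] that] by simp
  have "{a + c \<cdot>\<^sub>v u | a c. a \<in> mat_range d P} = mat_range d P"
  proof (intro equalityI subsetI)
    fix y assume "y \<in> mat_range d P"
    then have "y = y + 0 \<cdot>\<^sub>v u \<and> y \<in> mat_range d P" using triv by simp
    then show "y \<in> {a + c \<cdot>\<^sub>v u | a c. a \<in> mat_range d P}" by blast
  qed (use triv in auto)
  then show ?thesis using P by auto
next
  case False
  then show ?thesis using proj_add_line_proj[OF P u Pu] by blast
qed

lemma proj_extend:
  assumes P: "is_proj d P" and v: "v \<in> carrier_vec d"
  shows "\<exists>P'. is_proj d P' \<and> mat_range d P' = {a + c \<cdot>\<^sub>v v | a c. a \<in> mat_range d P}"
proof -
  have Pc: "P \<in> carrier_mat d d" using is_proj_carrier[OF P] .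
  have Pv: "P *\<^sub>v v \<in> mat_range d P" and Pvc: "P *\<^sub>v v \<in> carrier_vec d"
    using mult_vec_in_mat_range[OF v] Pc v by auto
  define u where "u = v - P *\<^sub>v v"
  have u: "u \<in> carrier_vec d" unfolding u_def using Pc v by auto
  have Pu: "P *\<^sub>v u = 0\<^sub>v d"
    unfolding u_def using mult_minus_distrib_mat_vec[OF Pc v Pvc] is_proj_mult_vec_idem[OF P v] Pvc by simp
  have shift: "a + c \<cdot>\<^sub>v (v - p) = (a + (- c) \<cdot>\<^sub>v p) + c \<cdot>\<^sub>v v"
    "a + c \<cdot>\<^sub>v v = (a + c \<cdot>\<^sub>v p) + c \<cdot>\<^sub>v (v - p)"
    if "a \<in> carrier_vec d" "p \<in> carrier_vec d" for a p c
    using that v by (intro eq_vecI; simp add: algebra_simps)+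
  have "{a + c \<cdot>\<^sub>v u | a c. a \<in> mat_range d P} = {a + c \<cdot>\<^sub>v v | a c. a \<in> mat_range d P}"
  proof (intro equalityI subsetI)
    fix y assume "y \<in> {a + c \<cdot>\<^sub>v u | a c. a \<in> mat_range d P}"
    then obtain a c where "a \<in> mat_range d P" "y = a + c \<cdot>\<^sub>v u" by auto
    then show "y \<in> {a + c \<cdot>\<^sub>v v | a c. a \<in> mat_range d P}"
      using shift(1)[of a "P *\<^sub>v v" c] Pvc mat_range_add_smult[OF Pc _ Pv] mat_range_carrier[OF Pc]
      unfolding u_def by blast
  next
    fix y assume "y \<in> {a + c \<cdot>\<^sub>v v | a c. a \<in> mat_range d P}"
    then obtain a c where "a \<in> mat_range d P" "y = a + c \<cdot>\<^sub>v v" by auto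
    then show "y \<in> {a + c \<cdot>\<^sub>v u | a c. a \<in> mat_range d P}"
      using shift(2)[of a "P *\<^sub>v v" c] Pvc mat_range_add_smult[OF Pc _ Pv] mat_range_carrier[OF Pc]
      unfolding u_def by blast
  qed
  then show ?thesis using proj_add_orthogonal_line[OF P u Pu] by simp
qed

lemma is_proj_zero: "is_proj d (0\<^sub>m d d)"
  unfolding is_proj_def by simp

definition span_first_cols :: "nat \<Rightarrow> complex mat \<Rightarrow> nat \<Rightarrow> complex vec set" where
  "span_first_cols d X k = {X *\<^sub>v w | w. w \<in> carrier_vec d \<and> (\<forall>j \<in> {k..<d}. w $ j = 0)}"

lemma span_first_cols_0: "X \<in> carrier_mat d d \<Longrightarrow> span_first_cols d X 0 = {0\<^sub>v d}"
proof -
  have "w \<in> carrier_vec d \<and> (\<forall>j \<in> {0..<d}. w $ j = 0) \<longleftrightarrow> w = 0\<^sub>v d" for w :: "complex vec"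
    by auto
  then show "X \<in> carrier_mat d d \<Longrightarrow> span_first_cols d X 0 = {0\<^sub>v d}"
    unfolding span_first_cols_def by auto
qed

lemma span_first_cols_Suc:
  assumes X: "X \<in> carrier_mat d d" and k: "k < d"
  shows "span_first_cols d X (Suc k) = {a + c \<cdot>\<^sub>v col X k | a c. a \<in> span_first_cols d X k}"
proof (intro equalityI subsetI)
  define e where "e = (unit_vec d k :: complex vec)"
  have e: "e \<in> carrier_vec d" and col: "col X k = X *\<^sub>v e"
    unfolding e_def using X k by auto
  {
    fix y assume "y \<in> {a + c \<cdot>\<^sub>v col X k | a c. a \<in> span_first_cols d X k}"
    then obtain w c where y: "y = X *\<^sub>v w + c \<cdot>\<^sub>v (X *\<^sub>v e)" "w \<in> carrier_vec d" "\<forall>j \<in> {k..<d}. w $ j = 0"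
      unfolding span_first_cols_def col by auto
    have "y = X *\<^sub>v (w + c \<cdot>\<^sub>v e)"
      unfolding y(1) using X y(2) e by (simp add: mult_add_distrib_mat_vec mult_mat_vec)
    moreover have "\<forall>j \<in> {Suc k..<d}. (w + c \<cdot>\<^sub>v e) $ j = 0" using y(2,3) unfolding e_def by auto
    moreover have "w + c \<cdot>\<^sub>v e \<in> carrier_vec d" using y(2) e by simp
    ultimately show "y \<in> span_first_cols d X (Suc k)" unfolding span_first_cols_def by blast
  next
    fix y assume "y \<in> span_first_cols d X (Suc k)"
    then obtain w' where y: "y = X *\<^sub>v w'" "w' \<in> carrier_vec d" "\<forall>j \<in> {Suc k..<d}. w' $ j = 0"
      unfolding span_first_cols_def by auto
    define w where "w = vec d (\<lambda>j. if j = k then 0 else w' $ j)"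
    define c where "c = w' $ k"
    have w: "w \<in> carrier_vec d" and "\<forall>j \<in> {k..<d}. w $ j = 0"
      using y(3) unfolding w_def by auto
    then have "X *\<^sub>v w \<in> span_first_cols d X k" unfolding span_first_cols_def by blast
    moreover have "w' = w + c \<cdot>\<^sub>v e"
      using y(2) unfolding w_def c_def e_def by (intro eq_vecI) (auto simp: unit_vec_def)
    then have "y = X *\<^sub>v w + c \<cdot>\<^sub>v col X k"
      unfolding y(1) col using X w e by (simp add: mult_add_distrib_mat_vec mult_mat_vec)
    ultimately show "y \<in> {a + c \<cdot>\<^sub>v col X k | a c. a \<in> span_first_cols d X k}" by blast
  }
qed

lemma exists_proj_onto_span_first_cols:
  assumes X: "X \<in> carrier_mat d d"
  shows "k \<le> d \<Longrightarrow> \<exists>P. is_proj d P \<and> mat_range d P = span_first_cols d X k"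
proof (induction k)
  case 0
  then show ?case using is_proj_zero mat_range_zero_mat span_first_cols_0[OF X] by blast
next
  case (Suc k)
  then obtain P where "is_proj d P" "mat_range d P = span_first_cols d X k" by auto
  then show ?case using proj_extend[of d P "col X k"] span_first_cols_Suc[OF X] X Suc.prems by auto
qed

lemma exists_proj_onto_mat_range:
  assumes X: "X \<in> carrier_mat d d"
  shows "\<exists>P. is_proj d P \<and> mat_range d P = mat_range d X"
  using exists_proj_onto_span_first_cols[OF X, of d] unfolding span_first_cols_def mat_range_def by auto

lemma supp_spec:
  assumes X: "X \<in> carrier_mat d d"
  shows "is_proj d (supp d X) \<and> mat_range d (supp d X) = mat_range d X"
proof -
  obtain P where P: "is_proj d P \<and> mat_range d P = mat_range d X"
    using exists_proj_onto_mat_range[OF X] by blast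
  show ?thesis unfolding supp_def
  proof (rule theI[of _ P])
    fix R assume "is_proj d R \<and> mat_range d R = mat_range d X"
    then show "R = P" using proj_eq_if_mat_range_eq[of d R P] P by auto
  qed (rule P)
qed

lemmas is_proj_supp = supp_spec[THEN conjunct1]
  and mat_range_supp = supp_spec[THEN conjunct2]

section \<open>Ranges of positive semidefinite matrices\<close>

lemma mat_range_subset_if_kernel_subset:
  fixes Y Z :: "complex mat"
  assumes Y: "Y \<in> carrier_mat d d" "mat_adjoint Y = Y" and Z: "Z \<in> carrier_mat d d" "mat_adjoint Z = Z"
    and ker: "\<And>t. t \<in> carrier_vec d \<Longrightarrow> Z *\<^sub>v t = 0\<^sub>v d \<Longrightarrow> Y *\<^sub>v t = 0\<^sub>v d"
  shows "mat_range d Y \<subseteq> mat_range d Z"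
proof -
  define P where "P = supp d Z"
  have P: "is_proj d P" and rP: "mat_range d P = mat_range d Z"
    using is_proj_supp[OF Z(1)] mat_range_supp[OF Z(1)] unfolding P_def by auto
  have Pc: "P \<in> carrier_mat d d" using is_proj_carrier[OF P] .
  have "Y *\<^sub>v (P *\<^sub>v u) = Y *\<^sub>v u" if u: "u \<in> carrier_vec d" for u
  proof -
    have Pu: "P *\<^sub>v u \<in> carrier_vec d" using Pc u by simp
    have "Z *\<^sub>v (u - P *\<^sub>v u) = 0\<^sub>v d"
      using proj_fixes_mat_range(2)[OF P Z _ u] rP mult_minus_distrib_mat_vec[OF Z(1) u Pu] Z(1) u by simp
    then have "Y *\<^sub>v (u - P *\<^sub>v u) = 0\<^sub>v d" using ker u Pu by simp
    then have "Y *\<^sub>v u - Y *\<^sub>v (P *\<^sub>v u) = 0\<^sub>v d" using mult_minus_distrib_mat_vec[OF Y(1) u Pu] by simp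
    then show ?thesis using vec_eq_if_diff_eq_0[of "Y *\<^sub>v u" d "Y *\<^sub>v (P *\<^sub>v u)"] Y(1) u Pu by simp
  qed
  then have "\<forall>w \<in> carrier_vec d. P *\<^sub>v (Y *\<^sub>v w) = Y *\<^sub>v w"
    using hermitian_fixes_range_iff[OF Y Pc is_proj_hermitian[OF P]] by blast
  then show ?thesis using rP mat_range_proj[OF P] Y(1) unfolding mat_range_def by auto
qed

lemma mat_range_subset_if_dominated:
  fixes Y Z :: "complex mat"
  assumes Y: "psd d Y" and Z: "psd d Z" and dom: "psd d (complex_of_real c \<cdot>\<^sub>m Z - Y)"
  shows "mat_range d Y \<subseteq> mat_range d Z"
proof (rule mat_range_subset_if_kernel_subset)
  show "Y \<in> carrier_mat d d" "mat_adjoint Y = Y" "Z \<in> carrier_mat d d" "mat_adjoint Z = Z"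
    using Y Z by (simp_all add: psd_carrier psd_hermitian)
  fix t assume t: "t \<in> carrier_vec d" and Zt: "Z *\<^sub>v t = 0\<^sub>v d"
  have "qform Z t = 0" unfolding qform_def Zt using t by simp
  then have "Re (qform Y t) \<le> 0"
    using psd_qform_nonneg[OF dom t] qform_diff[of _ d Y t] qform_smult[of Z d t] psd_carrier[OF Y] psd_carrier[OF Z] t
    by simp
  then show "Y *\<^sub>v t = 0\<^sub>v d"
    using psd_mult_vec_eq_0_if_qform_eq_0[OF Y t] psd_qform_nonneg[OF Y t] by simp
qed

lemma cmod_index_mult_le:
  assumes u: "u \<in> carrier_vec n" and i: "i < n" and j: "j < n"
  shows "cmod (u $ i) * cmod (u $ j) \<le> Re (u \<bullet>c u)"
proof -
  have sq: "(cmod (u $ k))\<^sup>2 \<le> Re (u \<bullet>c u)" if k: "k < n" for k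
  proof -
    have "(cmod (u $ k))\<^sup>2 = (\<Sum>l\<in>{k}. (cmod (u $ l))\<^sup>2)" by simp
    also have "\<dots> \<le> (\<Sum>l<n. (cmod (u $ l))\<^sup>2)" by (rule sum_mono2) (use k in auto)
    also have "\<dots> = Re (u \<bullet>c u)"
      by (simp add: cscalar_prod_sum[OF u u] complex_mult_cnj cmod_power2 del: of_real_power)
    finally show ?thesis .
  qed
  have "(cmod (u $ i) * cmod (u $ j))\<^sup>2 = (cmod (u $ i))\<^sup>2 * (cmod (u $ j))\<^sup>2"
    by (rule power_mult_distrib)
  also have "\<dots> \<le> Re (u \<bullet>c u) * Re (u \<bullet>c u)"
    by (rule mult_mono[OF sq[OF i] sq[OF j]]) (simp_all add: cscalar_prod_self_nonneg)
  also have "\<dots> = (Re (u \<bullet>c u))\<^sup>2" by (rule power2_eq_square[symmetric])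
  finally show ?thesis using power2_le_imp_le cscalar_prod_self_nonneg(1) by blast
qed

lemma cscalar_prod_mult_vec_bound:
  fixes B :: "complex mat"
  assumes B: "B \<in> carrier_mat n n"
  shows "\<exists>K \<ge> 1. \<forall>u \<in> carrier_vec n. cmod ((B *\<^sub>v u) \<bullet>c u) \<le> K * Re (u \<bullet>c u)"
proof -
  define S where "S = (\<Sum>i<n. \<Sum>j<n. cmod (B $$ (i, j)))"
  have S0: "S \<ge> 0" unfolding S_def by (intro sum_nonneg) auto
  have "cmod ((B *\<^sub>v u) \<bullet>c u) \<le> (1 + S) * Re (u \<bullet>c u)" if u: "u \<in> carrier_vec n" for u
  proof -
    have Bu: "B *\<^sub>v u \<in> carrier_vec n" using B u by simp
    have "(B *\<^sub>v u) \<bullet>c u = (\<Sum>i<n. \<Sum>j<n. B $$ (i, j) * u $ j * cnj (u $ i))"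
      by (simp add: cscalar_prod_sum[OF Bu u] mult_mat_vec_index_sum[OF B u] sum_distrib_right)
    then have "cmod ((B *\<^sub>v u) \<bullet>c u) \<le> (\<Sum>i<n. \<Sum>j<n. cmod (B $$ (i, j) * u $ j * cnj (u $ i)))"
      using order_trans[OF norm_sum sum_mono[OF norm_sum]] by simp
    also have "\<dots> \<le> (\<Sum>i<n. \<Sum>j<n. cmod (B $$ (i, j)) * Re (u \<bullet>c u))"
    proof (intro sum_mono)
      fix i j assume "i \<in> {..<n}" "j \<in> {..<n}"
      then have "cmod (u $ j) * cmod (u $ i) \<le> Re (u \<bullet>c u)" using cmod_index_mult_le[OF u] by simp
      then show "cmod (B $$ (i, j) * u $ j * cnj (u $ i)) \<le> cmod (B $$ (i, j)) * Re (u \<bullet>c u)"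
        by (simp add: norm_mult mult.assoc mult_left_mono)
    qed
    also have "\<dots> = S * Re (u \<bullet>c u)" unfolding S_def by (simp add: sum_distrib_right)
    also have "\<dots> \<le> (1 + S) * Re (u \<bullet>c u)" using cscalar_prod_self_nonneg(1)[of u] by (simp add: algebra_simps)
    finally show ?thesis .
  qed
  then show ?thesis using S0 by (intro exI[of _ "1 + S"]) auto
qed

lemma qform_mult_proj:
  assumes P: "is_proj d P" and X: "X \<in> carrier_mat d d" "mat_adjoint X = X"
    and sub: "mat_range d X \<subseteq> mat_range d P" and v: "v \<in> carrier_vec d"
  shows "qform X (P *\<^sub>v v) = qform X v"
proof -
  have Pc: "P \<in> carrier_mat d d" using is_proj_carrier[OF P] .
  have Xv: "X *\<^sub>v v \<in> carrier_vec d" using X v by simp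
  have "qform X (P *\<^sub>v v) = (X *\<^sub>v v) \<bullet>c (P *\<^sub>v v)"
    unfolding qform_def using proj_fixes_mat_range(2)[OF P X sub v] by simp
  also have "\<dots> = (P *\<^sub>v (X *\<^sub>v v)) \<bullet>c v"
    using hermitian_cscalar_prod[OF Pc is_proj_hermitian[OF P] Xv v] by simp
  also have "\<dots> = qform X v" unfolding qform_def using proj_fixes_mat_range(1)[OF P X sub v] by simp
  finally show ?thesis .
qed

lemma supp_eq_mult:
  fixes Z :: "complex mat"
  assumes Z: "Z \<in> carrier_mat d d"
  shows "\<exists>M \<in> carrier_mat d d. \<forall>v \<in> carrier_vec d. supp d Z *\<^sub>v v = Z *\<^sub>v (M *\<^sub>v v)"
proof -
  define P where "P = supp d Z"
  have Pc: "P \<in> carrier_mat d d" using is_proj_carrier[OF is_proj_supp[OF Z]] unfolding P_def .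
  have "\<exists>m. m \<in> carrier_vec d \<and> Z *\<^sub>v m = col P j" if j: "j < d" for j
  proof -
    have "col P j = P *\<^sub>v unit_vec d j" using Pc j by (intro eq_vecI) auto
    then have "col P j \<in> mat_range d Z"
      using mult_vec_in_mat_range[of "unit_vec d j" d P] mat_range_supp[OF Z] unfolding P_def by simp
    then show ?thesis unfolding mat_range_def by auto
  qed
  then obtain m where m: "\<And>j. j < d \<Longrightarrow> m j \<in> carrier_vec d \<and> Z *\<^sub>v m j = col P j" by metis
  define M where "M = mat d d (\<lambda>(i, j). m j $ i)"
  have Mc: "M \<in> carrier_mat d d" unfolding M_def by simp
  have colM: "col M j = m j" if j: "j < d" for j
    unfolding M_def using j m[OF j] by (intro eq_vecI) auto
  have "Z * M = P"
  proof (rule eq_matI)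
    fix i j assume "i < dim_row P" "j < dim_col P"
    then have ij: "i < d" "j < d" using Pc by auto
    then have "(Z * M) $$ (i, j) = (Z *\<^sub>v m j) $ i" using Z Mc colM[OF ij(2)] by simp
    then show "(Z * M) $$ (i, j) = P $$ (i, j)" using Pc m[OF ij(2)] ij by simp
  qed (use Z Mc Pc in auto)
  then show ?thesis using assoc_mult_mat_vec[OF Z Mc] Mc unfolding P_def by auto
qed

lemma supp_dominated:
  fixes Z :: "complex mat"
  assumes Z: "psd d Z"
  shows "\<exists>K \<ge> 1. \<forall>v \<in> carrier_vec d. Re (qform (supp d Z) v) \<le> K * Re (qform Z v)"
proof -
  have Zc: "Z \<in> carrier_mat d d" and Zh: "mat_adjoint Z = Z" using Z by (simp_all add: psd_carrier psd_hermitian)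
  define P where "P = supp d Z"
  have P: "is_proj d P" and rP: "mat_range d Z \<subseteq> mat_range d P"
    using is_proj_supp[OF Zc] mat_range_supp[OF Zc] unfolding P_def by auto
  have Pc: "P \<in> carrier_mat d d" using is_proj_carrier[OF P] .
  obtain M where Mc: "M \<in> carrier_mat d d" and PM: "\<And>v. v \<in> carrier_vec d \<Longrightarrow> P *\<^sub>v v = Z *\<^sub>v (M *\<^sub>v v)"
    using supp_eq_mult[OF Zc] unfolding P_def by blast
  obtain K where K1: "K \<ge> 1"
    and Kb: "\<And>u. u \<in> carrier_vec d \<Longrightarrow> cmod ((M *\<^sub>v u) \<bullet>c u) \<le> K * Re (u \<bullet>c u)"
    using cscalar_prod_mult_vec_bound[OF Mc] by blast
  have "Re (qform P v) \<le> K * Re (qform Z v)" if v: "v \<in> carrier_vec d" for v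
  proof -
    define u where "u = P *\<^sub>v v"
    define m where "m = M *\<^sub>v u"
    define N where "N = Re (u \<bullet>c u)"
    define q where "q = Re (qform Z v)"
    have u: "u \<in> carrier_vec d" and m: "m \<in> carrier_vec d" unfolding u_def m_def using Pc Mc v by auto
    \<comment> \<open>Z m = u with qform Z m \<le> K |u|^2, and 0 \<le> qform Z (m - K u) gives the bound\<close>
    have Zm: "Z *\<^sub>v m = u" unfolding m_def using PM[OF u] is_proj_mult_vec_idem[OF P v] unfolding u_def by simp
    have e1: "(Z *\<^sub>v m) \<bullet>c u = u \<bullet>c u" and e2: "(Z *\<^sub>v u) \<bullet>c m = u \<bullet>c u"
      using Zm hermitian_cscalar_prod[OF Zc Zh u m] by simp_all
    have qm: "Re (qform Z m) \<le> K * N"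
    proof -
      have "qform Z m = u \<bullet>c m" unfolding qform_def Zm ..
      also have "\<dots> = cnj (m \<bullet>c u)" using cnj_cscalar_prod[OF m u] by simp
      finally have "qform Z m = cnj ((M *\<^sub>v u) \<bullet>c u)" unfolding m_def .
      then have "Re (qform Z m) \<le> cmod ((M *\<^sub>v u) \<bullet>c u)" by (metis complex_Re_le_cmod complex_mod_cnj)
      also have "\<dots> \<le> K * N" unfolding N_def by (rule Kb[OF u])
      finally show ?thesis .
    qed
    have "0 \<le> Re (qform Z (m + complex_of_real (- K) \<cdot>\<^sub>v u))" using psd_qform_nonneg[OF Z] m u by simp
    also have "\<dots> = Re (qform Z m) - 2 * K * N + K * K * q"
      using qform_mult_proj[OF P Zc Zh rP v] unfolding qform_add_smult[OF Zc m u] e1 e2 N_def q_def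
      by (simp add: u_def)
    also have "\<dots> \<le> K * N - 2 * K * N + K * K * q" using qm by simp
    finally have "N \<le> K * q" using K1 by (simp add: algebra_simps)
    then show ?thesis unfolding N_def q_def u_def using qform_proj[OF P v] by simp
  qed
  then show ?thesis unfolding P_def using K1 by blast
qed

lemma dominated_if_mat_range_subset:
  fixes Y Z :: "complex mat"
  assumes Y: "psd d Y" and Z: "psd d Z" and sub: "mat_range d Y \<subseteq> mat_range d Z"
  shows "\<exists>c \<ge> 0. psd d (complex_of_real c \<cdot>\<^sub>m Z - Y)"
proof -
  have Zc: "Z \<in> carrier_mat d d" and Yc: "Y \<in> carrier_mat d d" and Yh: "mat_adjoint Y = Y"
    using Y Z by (simp_all add: psd_carrier psd_hermitian)
  define P where "P = supp d Z"
  have P: "is_proj d P" and rP: "mat_range d Y \<subseteq> mat_range d P"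
    using is_proj_supp[OF Zc] mat_range_supp[OF Zc] sub unfolding P_def by auto
  obtain K where K1: "K \<ge> 1" and KP: "\<And>v. v \<in> carrier_vec d \<Longrightarrow> Re (qform P v) \<le> K * Re (qform Z v)"
    using supp_dominated[OF Z] unfolding P_def by blast
  obtain L where L1: "L \<ge> 1" and Lb: "\<And>u. u \<in> carrier_vec d \<Longrightarrow> cmod ((Y *\<^sub>v u) \<bullet>c u) \<le> L * Re (u \<bullet>c u)"
    using cscalar_prod_mult_vec_bound[OF Yc] by blast
  have "Re (qform Y v) \<le> (L * K) * Re (qform Z v)" if v: "v \<in> carrier_vec d" for v
  proof -
    have Pv: "P *\<^sub>v v \<in> carrier_vec d" using is_proj_carrier[OF P] v by simp
    have "Re (qform Y v) = Re (qform Y (P *\<^sub>v v))" using qform_mult_proj[OF P Yc Yh rP v] by simp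
    also have "\<dots> \<le> cmod (qform Y (P *\<^sub>v v))" by (rule complex_Re_le_cmod)
    also have "\<dots> \<le> L * Re ((P *\<^sub>v v) \<bullet>c (P *\<^sub>v v))" unfolding qform_def by (rule Lb[OF Pv])
    also have "\<dots> = L * Re (qform P v)" using qform_proj[OF P v] by simp
    also have "\<dots> \<le> L * (K * Re (qform Z v))" using KP[OF v] L1 by simp
    finally show ?thesis by (simp add: algebra_simps)
  qed
  then have "psd d (complex_of_real (L * K) \<cdot>\<^sub>m Z - Y)"
    using psd_smult_diff[OF Zc Yc psd_hermitian[OF Z] Yh] by blast
  then show ?thesis using K1 L1 by (intro exI[of _ "L * K"]) auto
qed

lemma positive_map_mat_range_mono:
  assumes T: "positive_map d T" and Y: "psd d Y" and Z: "psd d Z"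
    and sub: "mat_range d Y \<subseteq> mat_range d Z"
  shows "mat_range d (T Y) \<subseteq> mat_range d (T Z)"
proof -
  obtain c where "psd d (complex_of_real c \<cdot>\<^sub>m Z - Y)" using dominated_if_mat_range_subset[OF Y Z sub] by blast
  moreover have "T (complex_of_real c \<cdot>\<^sub>m Z - Y) = complex_of_real c \<cdot>\<^sub>m T Z - T Y"
    using lin_map_diff[OF positive_map_lin_map[OF T]] lin_map_smult[OF positive_map_lin_map[OF T]]
      psd_carrier[OF Y] psd_carrier[OF Z] by simp
  ultimately show ?thesis
    using mat_range_subset_if_dominated positive_map_psd[OF T] Y Z by metis
qed

section \<open>Joins of supports\<close>

lemma proj_join_eqI:
  assumes Q: "is_proj d Q" and upper: "\<forall>P \<in> S. loewner_le d P Q"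
    and least: "\<And>R. is_proj d R \<Longrightarrow> \<forall>P \<in> S. loewner_le d P R \<Longrightarrow> loewner_le d Q R"
  shows "proj_join d S = Q"
  unfolding proj_join_def
proof (rule the_equality)
  fix Q' assume Q': "is_proj d Q' \<and> (\<forall>P \<in> S. loewner_le d P Q') \<and>
    (\<forall>R. is_proj d R \<and> (\<forall>P \<in> S. loewner_le d P R) \<longrightarrow> loewner_le d Q' R)"
  then have "loewner_le d Q' Q" using Q upper by blast
  moreover have "loewner_le d Q Q'" using least Q' by blast
  ultimately have "mat_range d Q' = mat_range d Q"
    using proj_le_iff_mat_range_subset[OF _ Q, of Q'] proj_le_iff_mat_range_subset[OF Q, of Q'] Q' by blast
  then show "Q' = Q" using proj_eq_if_mat_range_eq[OF _ Q, of Q'] Q' by blast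
qed (use Q upper least in auto)

lemma mat_range_mat_sum_subset:
  assumes R: "is_proj d R" and f: "\<And>i. i < m \<Longrightarrow> f i \<in> carrier_mat d d"
    and sub: "\<And>i. i < m \<Longrightarrow> mat_range d (f i) \<subseteq> mat_range d R"
  shows "mat_range d (mat_sum d f m) \<subseteq> mat_range d R"
  using f sub
proof (induction m)
  case 0
  have "0\<^sub>v d \<in> mat_range d R" using mult_vec_in_mat_range[of "0\<^sub>v d" d R] is_proj_carrier[OF R] by simp
  then show ?case by (simp add: mat_range_zero_mat)
next
  case (Suc m)
  have c: "mat_sum d f m \<in> carrier_mat d d" "f m \<in> carrier_mat d d" using Suc.prems by (auto intro!: mat_sum_carrier)
  have Rc: "R \<in> carrier_mat d d" using is_proj_carrier[OF R] .
  show ?case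
  proof
    fix y assume "y \<in> mat_range d (mat_sum d f (Suc m))"
    then obtain w where w: "w \<in> carrier_vec d" and y: "y = mat_sum d f m *\<^sub>v w + f m *\<^sub>v w"
      unfolding mat_range_def using add_mult_distrib_mat_vec[OF c] by auto
    have "mat_sum d f m *\<^sub>v w \<in> mat_range d R" "f m *\<^sub>v w \<in> mat_range d R"
      using Suc mult_vec_in_mat_range[OF w, of "mat_sum d f m"] mult_vec_in_mat_range[OF w, of "f m"]
      by auto
    then have "mat_sum d f m *\<^sub>v w + 1 \<cdot>\<^sub>v (f m *\<^sub>v w) \<in> mat_range d R"
      by (rule mat_range_add_smult[OF Rc])
    then show "y \<in> mat_range d R" unfolding y by simp
  qed
qed

lemma proj_join_supp_eq_supp_mat_sum:
  assumes f: "\<And>i. i < m \<Longrightarrow> psd d (f i)"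
  shows "proj_join d {supp d (f k) | k. k < m} = supp d (mat_sum d f m)"
proof (rule proj_join_eqI)
  have fc: "\<And>i. i < m \<Longrightarrow> f i \<in> carrier_mat d d" using f psd_carrier by blast
  define F where "F = mat_sum d f m"
  have F: "psd d F" unfolding F_def by (rule psd_mat_sum[OF f])
  have Fc: "F \<in> carrier_mat d d" using psd_carrier[OF F] .
  show Q: "is_proj d (supp d F)" by (rule is_proj_supp[OF Fc])
  have "mat_range d (f k) \<subseteq> mat_range d F" if k: "k < m" for k
  proof (rule mat_range_subset_if_dominated[OF f[OF k] F, of 1])
    have "complex_of_real 1 \<cdot>\<^sub>m F = F" using Fc by (intro eq_matI) auto
    then show "psd d (complex_of_real 1 \<cdot>\<^sub>m F - f k)"
      using psd_mat_sum_minus_term[where f = f, OF f k] unfolding F_def by simp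
  qed
  then show "\<forall>P \<in> {supp d (f k) | k. k < m}. loewner_le d P (supp d F)"
    using proj_le_iff_mat_range_subset[OF is_proj_supp Q] mat_range_supp Fc fc by auto
  fix R assume R: "is_proj d R" and upper: "\<forall>P \<in> {supp d (f k) | k. k < m}. loewner_le d P R"
  have "mat_range d (f i) \<subseteq> mat_range d R" if i: "i < m" for i
    using upper i proj_le_iff_mat_range_subset[OF is_proj_supp[OF fc[OF i]] R] mat_range_supp[OF fc[OF i]]
    by auto
  then have "mat_range d F \<subseteq> mat_range d R" using mat_range_mat_sum_subset[where f = f and m = m, OF R fc] unfolding F_def by blast
  then show "loewner_le d (supp d F) R" using proj_le_iff_mat_range_subset[OF Q R] mat_range_supp[OF Fc] by simp
qed

section \<open>Rank bounds from chains of subspaces\<close>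

lemma antimono_chain:
  assumes "\<And>k. k < m \<Longrightarrow> W (Suc k) \<subseteq> W k" and "i \<le> j" and "j \<le> m"
  shows "W j \<subseteq> W i"
  using assms(2,3)
proof (induction j rule: dec_induct)
  case (step j)
  then show ?case using assms(1)[of j] by auto
qed simp

context vec_space
begin

lemma mult_mat_vec_submodule:
  assumes X: "X \<in> carrier_mat n nc"
  shows "submodule class_ring {X *\<^sub>v w | w. w \<in> carrier_vec nc} V"
proof (unfold_locales)
  show "{X *\<^sub>v w | w. w \<in> carrier_vec nc} \<subseteq> carrier V" using X by auto
  show "\<zero>\<^bsub>V\<^esub> \<in> {X *\<^sub>v w | w. w \<in> carrier_vec nc}"
    using X by (auto intro!: exI[of _ "0\<^sub>v nc"] simp: scalar_prod_def)
  fix v w assume "v \<in> {X *\<^sub>v w | w. w \<in> carrier_vec nc}" "w \<in> {X *\<^sub>v w | w. w \<in> carrier_vec nc}"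
  then obtain a b where "v = X *\<^sub>v a" "w = X *\<^sub>v b" "a \<in> carrier_vec nc" "b \<in> carrier_vec nc" by auto
  then show "v \<oplus>\<^bsub>V\<^esub> w \<in> {X *\<^sub>v w | w. w \<in> carrier_vec nc}"
    using X by (auto intro!: exI[of _ "a + b"] simp: mult_add_distrib_mat_vec)
next
  fix c :: 'a and v assume "v \<in> {X *\<^sub>v w | w. w \<in> carrier_vec nc}"
  then obtain a where "v = X *\<^sub>v a" "a \<in> carrier_vec nc" by auto
  then show "c \<odot>\<^bsub>V\<^esub> v \<in> {X *\<^sub>v w | w. w \<in> carrier_vec nc}"
    using X by (auto intro!: exI[of _ "c \<cdot>\<^sub>v a"] simp: mult_mat_vec)
qed

lemma mult_mat_vec_in_span_cols:
  assumes X: "X \<in> carrier_mat n nc" and w: "w \<in> carrier_vec nc"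
  shows "X *\<^sub>v w \<in> span (set (cols X))"
proof -
  have "\<forall>u \<in> set (cols X). dim_vec u = n" using X cols_dim[of X] by auto
  moreover have "mat_of_cols n (cols X) = X" using mat_of_cols_cols[of X] X by simp
  moreover have "vec nc (\<lambda>i. w $ i) = w" using w by auto
  ultimately have "X *\<^sub>v w = lincomb_list (\<lambda>i. w $ i) (cols X)"
    using lincomb_list_as_mat_mult[of "cols X" "\<lambda>i. w $ i"] X by simp
  moreover have "{lincomb_list c (cols X) | c. True} = span (set (cols X))"
    using span_list_as_span[of "cols X"] X cols_dim[of X] unfolding span_list_def by simp
  ultimately show ?thesis by blast
qed

lemma card_le_rank_if_lin_indpt:
  assumes X: "X \<in> carrier_mat n nc" and Vs: "Vs \<subseteq> {X *\<^sub>v w | w. w \<in> carrier_vec nc}"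
    and li: "lin_indpt Vs"
  shows "card Vs \<le> rank X"
proof -
  let ?C = "set (cols X)"
  have C: "?C \<subseteq> carrier_vec n" using X cols_dim[of X] by auto
  have sub: "Vs \<subseteq> span ?C" using Vs mult_mat_vec_in_span_cols[OF X] by auto
  have vs: "vectorspace class_ring (span_vs ?C)"
    using span_is_subspace[OF C] subspace_is_vs by simp
  have "LinearCombinations.module.lin_indpt class_ring (span_vs ?C) Vs"
    using span_li_not_depend(2)[OF sub span_is_submodule[OF C]] li by simp
  then show ?thesis
    unfolding rank_def using vectorspace.li_le_dim(2)[OF vs fin_dim_span_cols[OF X]] sub by simp
qed

lemma lin_indpt_of_strict_chain:
  assumes sub: "\<And>k. k \<le> m \<Longrightarrow> submodule class_ring (W k) V"
    and mono: "\<And>k. k < m \<Longrightarrow> W (Suc k) \<subseteq> W k"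
    and vin: "\<And>k. k < m \<Longrightarrow> v k \<in> W k" and vout: "\<And>k. k < m \<Longrightarrow> v k \<notin> W (Suc k)"
  shows "lin_indpt (v ` {..<m})"
proof -
  have "lin_indpt (v ` {k..<m}) \<and> v ` {k..<m} \<subseteq> W k" if "k \<le> m" for k
    using that
  proof (induction k rule: inc_induct)
    case base
    have "lin_indpt {}" unfolding lin_dep_def by auto
    then show ?case by simp
  next
    case (step k)
    let ?S = "v ` {Suc k..<m}"
    have IH: "lin_indpt ?S" "?S \<subseteq> W (Suc k)" using step by auto
    have carrier: "W j \<subseteq> carrier_vec n" if "j \<le> m" for j
      using submodule.subset[OF sub[OF that]] by simp
    have "span ?S \<subseteq> W (Suc k)" by (rule span_is_subset[OF IH(2) sub]) (use step in simp)
    then have "v k \<notin> span ?S" using vout[OF step(2)] by auto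
    moreover have "v k \<notin> ?S" using IH(2) vout[OF step(2)] by auto
    ultimately have "lin_indpt (insert (v k) ?S)"
      using lin_dep_iff_in_span[OF _ IH(1)] IH(2) carrier[of "Suc k"] carrier[of k] vin[OF step(2)] step(2)
      by auto
    moreover have "{k..<m} = insert k {Suc k..<m}" using step(2) by auto
    then have "v ` {k..<m} = insert (v k) ?S" by simp
    ultimately show ?case using IH(2) mono[OF step(2)] vin[OF step(2)] by auto
  qed
  from this[of 0] show ?thesis by (simp add: atLeast0LessThan)
qed

lemma strict_chain_length_le_rank:
  assumes X: "X \<in> carrier_mat n nc"
    and sub: "\<And>k. k \<le> m \<Longrightarrow> submodule class_ring (W k) V"
    and strict: "\<And>k. k < m \<Longrightarrow> W (Suc k) \<subset> W k"
    and top: "W 0 \<subseteq> {X *\<^sub>v w | w. w \<in> carrier_vec nc}"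
  shows "m \<le> rank X"
proof -
  have "\<forall>k. \<exists>x. k < m \<longrightarrow> x \<in> W k \<and> x \<notin> W (Suc k)" using strict by blast
  from choice[OF this] obtain v where v: "\<And>k. k < m \<Longrightarrow> v k \<in> W k \<and> v k \<notin> W (Suc k)" by blast
  have mono: "\<And>k. k < m \<Longrightarrow> W (Suc k) \<subseteq> W k" using strict by blast
  have "inj_on v {..<m}"
  proof (rule inj_onI)
    fix i j assume i: "i \<in> {..<m}" and j: "j \<in> {..<m}" and eq: "v i = v j"
    show "i = j"
    proof (rule linorder_cases[of i j])
      assume "i < j"
      then have "v j \<in> W (Suc i)" using v[of j] j antimono_chain[where W = W and m = m and i = "Suc i" and j = j, OF mono] by auto
      then show ?thesis using v[of i] i eq by simp
    next
      assume "j < i"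
      then have "v i \<in> W (Suc j)" using v[of i] i antimono_chain[where W = W and m = m and i = "Suc j" and j = i, OF mono] by auto
      then show ?thesis using v[of j] j eq by simp
    qed
  qed
  then have "m = card (v ` {..<m})" by (simp add: card_image)
  also have "\<dots> \<le> rank X"
  proof (rule card_le_rank_if_lin_indpt[OF X])
    have "v k \<in> W 0" if "k < m" for k
      using v[OF that] antimono_chain[where W = W and m = m and i = 0 and j = k, OF mono] that by auto
    then show "v ` {..<m} \<subseteq> {X *\<^sub>v w | w. w \<in> carrier_vec nc}" using top by blast
    show "lin_indpt (v ` {..<m})" by (rule lin_indpt_of_strict_chain[where W = W and m = m, OF sub mono]) (use v in auto)
  qed
  finally show ?thesis .
qed

end

section \<open>Iterates of a positive subunital map\<close>

lemma funpow_in_comp_closed: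
  assumes T: "T \<in> A" and A: "comp_closed d A" and k: "k \<ge> 1"
  shows "\<exists>U \<in> A. \<forall>X \<in> carrier_mat d d. U X = (T ^^ k) X"
  using k
proof (induction k rule: dec_induct)
  case base
  then show ?case using T by (intro bexI[of _ T]) auto
next
  case (step k)
  then obtain U where U: "U \<in> A" "\<forall>X \<in> carrier_mat d d. U X = (T ^^ k) X" by blast
  from A U(1) T obtain W where "W \<in> A" "\<forall>X \<in> carrier_mat d d. W X = T (U X)"
    unfolding comp_closed_def by blast
  then show ?case using U by (intro bexI[of _ W]) auto
qed

lemma funpow_eventually_periodic:
  assumes A: "finite A" and T: "T \<in> A" and closed: "comp_closed d A"
  shows "\<exists>a p. a \<ge> 1 \<and> p \<ge> 1 \<and> (\<forall>X \<in> carrier_mat d d. (T ^^ (a + p)) X = (T ^^ a) X)"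
proof -
  have "\<exists>U. U \<in> A \<and> (\<forall>X \<in> carrier_mat d d. U X = (T ^^ Suc k) X)" for k
    using funpow_in_comp_closed[OF T closed, of "Suc k"] by (simp add: Bex_def)
  then have "\<forall>k. \<exists>U. U \<in> A \<and> (\<forall>X \<in> carrier_mat d d. U X = (T ^^ Suc k) X)" by blast
  from choice[OF this] obtain g
    where g: "\<And>k. g k \<in> A" "\<And>k X. X \<in> carrier_mat d d \<Longrightarrow> g k X = (T ^^ Suc k) X" by blast
  have "\<not> inj_on g {..card A}"
  proof
    assume "inj_on g {..card A}"
    then have "card {..card A} \<le> card A" using card_inj_on_le[of g "{..card A}" A] g(1) A by auto
    then show False by simp
  qed
  then obtain i j where "i < j" "g i = g j"
    unfolding inj_on_def by (metis linorder_neqE_nat)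
  then have "\<forall>X \<in> carrier_mat d d. (T ^^ (Suc i + (j - i))) X = (T ^^ Suc i) X"
    using g(2)[where k = i] g(2)[where k = j] by auto
  then show ?thesis using \<open>i < j\<close> by (intro exI[of _ "Suc i"] exI[of _ "j - i"]) auto
qed

locale positive_subunital_map =
  fixes d :: nat and T :: "complex mat \<Rightarrow> complex mat"
  assumes positive: "positive_map d T" and subunital: "subunital d T"
begin

lemma lin_map_T: "lin_map d T"
  using positive by (rule positive_map_lin_map)

definition defect_pow :: "nat \<Rightarrow> complex mat" where
  "defect_pow k = (T ^^ k) (defect d T)"

lemma psd_defect_pow: "psd d (defect_pow k)"
proof -
  have "psd d (defect d T)" using subunital unfolding defect_def subunital_def loewner_le_def by simp
  then show ?thesis unfolding defect_pow_def by (rule positive_map_psd[OF positive_map_funpow[OF positive]])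
qed

lemma defect_pow_carrier: "defect_pow k \<in> carrier_mat d d"
  using psd_carrier[OF psd_defect_pow] .

lemma defect_pow_Suc: "defect_pow (Suc k) = T (defect_pow k)"
  unfolding defect_pow_def by simp

lemma mat_sum_defect_pow: "mat_sum d defect_pow m = 1\<^sub>m d - (T ^^ m) (1\<^sub>m d)"
proof (induction m)
  case (Suc m)
  have pow_one: "(T ^^ k) (1\<^sub>m d) \<in> carrier_mat d d" for k
    using lin_map_carrier[OF lin_map_funpow[OF lin_map_T]] by simp
  have "defect_pow m = (T ^^ m) (1\<^sub>m d) - (T ^^ m) (T (1\<^sub>m d))"
    unfolding defect_pow_def defect_def using lin_map_diff[OF lin_map_funpow[OF lin_map_T]] pow_one[of 1] by simp
  also have "(T ^^ m) (T (1\<^sub>m d)) = (T ^^ Suc m) (1\<^sub>m d)" by (simp add: funpow_swap1)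
  finally show ?case using Suc pow_one[of m] pow_one[of "Suc m"] by (intro eq_matI) auto
qed (intro eq_matI, auto)

lemma sum_qform_defect_pow_le:
  assumes v: "v \<in> carrier_vec d"
  shows "(\<Sum>i<m. Re (qform (defect_pow i) v)) \<le> Re (v \<bullet>c v)"
proof -
  have "(\<Sum>i<m. Re (qform (defect_pow i) v)) = Re (qform (1\<^sub>m d - (T ^^ m) (1\<^sub>m d)) v)"
    using qform_mat_sum[of m defect_pow d v] defect_pow_carrier v by (simp add: mat_sum_defect_pow)
  also have "\<dots> = Re (v \<bullet>c v) - Re (qform ((T ^^ m) (1\<^sub>m d)) v)"
    using qform_diff[of "1\<^sub>m d" d] psd_carrier[OF positive_map_psd[OF positive_map_funpow[OF positive] psd_one]] v
    by simp
  also have "\<dots> \<le> Re (v \<bullet>c v)"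
    using psd_qform_nonneg[OF positive_map_psd[OF positive_map_funpow[OF positive] psd_one] v] by simp
  finally show ?thesis .
qed

lemma defect_pow_periodic:
  assumes per: "\<forall>X \<in> carrier_mat d d. (T ^^ (a + p)) X = (T ^^ a) X"
  shows "defect_pow (a + r + m * p) = defect_pow (a + r)"
proof (induction m)
  case (Suc m)
  have "a + r + Suc m * p = (r + m * p) + (a + p)" "a + r + m * p = (r + m * p) + a" by simp_all
  then have "defect_pow (a + r + Suc m * p) = (T ^^ (r + m * p)) ((T ^^ (a + p)) (defect d T))"
    "defect_pow (a + r + m * p) = (T ^^ (r + m * p)) ((T ^^ a) (defect d T))"
    unfolding defect_pow_def by (simp_all only: funpow_add comp_apply)
  then show ?case using Suc per defect_pow_carrier[of 0] unfolding defect_pow_def by simp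
qed simp

lemma defect_pow_eq_0_if_periodic:
  assumes per: "\<forall>X \<in> carrier_mat d d. (T ^^ (a + p)) X = (T ^^ a) X" and p: "p \<ge> 1" and k: "k \<ge> a"
  shows "defect_pow k = 0\<^sub>m d d"
proof (rule psd_eq_0_if_qform_nonpos[OF psd_defect_pow])
  fix v :: "complex vec" assume v: "v \<in> carrier_vec d"
  obtain r where kr: "k = a + r" using k le_Suc_ex by blast
  define c where "c = Re (qform (defect_pow k) v)"
  have bound: "real M * c \<le> Re (v \<bullet>c v)" for M
  proof -
    have inj: "inj_on (\<lambda>m. k + m * p) {..<M}" using p by (auto simp: inj_on_def)
    have "real M * c = (\<Sum>m<M. Re (qform (defect_pow (k + m * p)) v))"
      unfolding c_def kr using defect_pow_periodic[OF per] by simp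
    also have "\<dots> = (\<Sum>i \<in> (\<lambda>m. k + m * p) ` {..<M}. Re (qform (defect_pow i) v))"
      by (simp add: sum.reindex[OF inj])
    also have "\<dots> \<le> (\<Sum>i < k + M * p. Re (qform (defect_pow i) v))"
      using p by (intro sum_mono2) (auto intro: psd_qform_nonneg[OF psd_defect_pow v])
    also have "\<dots> \<le> Re (v \<bullet>c v)" by (rule sum_qform_defect_pow_le[OF v])
    finally show ?thesis .
  qed
  show "Re (qform (defect_pow k) v) \<le> 0"
  proof (rule ccontr)
    assume "\<not> Re (qform (defect_pow k) v) \<le> 0"
    then have c: "c > 0" unfolding c_def by simp
    obtain M :: nat where "Re (v \<bullet>c v) / c < real M" using reals_Archimedean2 by blast
    then show False using bound[of M] c by (simp add: field_simps)
  qed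
qed

lemma defect_pow_eq_0_mono:
  assumes zero: "defect_pow n = 0\<^sub>m d d" and k: "n \<le> k"
  shows "defect_pow k = 0\<^sub>m d d"
proof -
  obtain j where "k = j + n" using k le_Suc_ex by (metis add.commute)
  then have "defect_pow k = (T ^^ j) (defect_pow n)" unfolding defect_pow_def by (simp add: funpow_add)
  then show ?thesis using zero lin_map_zero[OF lin_map_funpow[OF lin_map_T]] by simp
qed

lemma stab_index_spec:
  assumes ex: "\<exists>n \<ge> 1. defect_pow n = 0\<^sub>m d d"
  shows stab_index_ge_1: "stab_index d T \<ge> 1"
    and defect_pow_stab_index: "defect_pow (stab_index d T) = 0\<^sub>m d d"
    and stab_index_least: "\<And>k. k \<ge> 1 \<Longrightarrow> defect_pow k = 0\<^sub>m d d \<Longrightarrow> stab_index d T \<le> k"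
proof -
  have eq: "stab_index d T = (LEAST n. n \<ge> 1 \<and> defect_pow n = 0\<^sub>m d d)"
    unfolding stab_index_def defect_pow_def ..
  show "stab_index d T \<ge> 1" "defect_pow (stab_index d T) = 0\<^sub>m d d"
    using LeastI_ex[OF ex] unfolding eq by auto
  show "\<And>k. k \<ge> 1 \<Longrightarrow> defect_pow k = 0\<^sub>m d d \<Longrightarrow> stab_index d T \<le> k"
    unfolding eq by (rule Least_le) simp
qed

lemma defect_pow_stab_index_pred:
  assumes ex: "\<exists>n \<ge> 1. defect_pow n = 0\<^sub>m d d" and D: "defect d T \<noteq> 0\<^sub>m d d"
  shows "defect_pow (stab_index d T - 1) \<noteq> 0\<^sub>m d d"
proof (cases "stab_index d T - 1 = 0")
  case True
  then show ?thesis using D unfolding defect_pow_def by simp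
next
  case False
  show ?thesis
  proof
    assume "defect_pow (stab_index d T - 1) = 0\<^sub>m d d"
    then have "stab_index d T \<le> stab_index d T - 1" using stab_index_least[OF ex] False by simp
    then show False using False by linarith
  qed
qed

definition defect_tail :: "nat \<Rightarrow> nat \<Rightarrow> complex mat" where
  "defect_tail n k = mat_sum d (\<lambda>j. defect_pow (k + j)) n"

lemma psd_defect_tail: "psd d (defect_tail n k)"
  unfolding defect_tail_def by (rule psd_mat_sum) (rule psd_defect_pow)

lemma defect_tail_carrier: "defect_tail n k \<in> carrier_mat d d"
  using psd_carrier[OF psd_defect_tail] .

lemma funpow_defect_tail: "(T ^^ j) (defect_tail n k) = defect_tail n (k + j)"
proof (induction j)
  case (Suc j)
  have "T (defect_tail n (k + j)) = defect_tail n (Suc (k + j))"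
    unfolding defect_tail_def by (subst lin_map_mat_sum[OF lin_map_T]) (auto simp: defect_pow_carrier defect_pow_Suc)
  then show ?case using Suc by simp
qed simp

context
  fixes n :: nat
  assumes zero: "defect_pow n = 0\<^sub>m d d" and n: "n \<ge> 1"
begin

lemma defect_tail_Suc: "defect_tail n k = defect_pow k + defect_tail n (Suc k)"
proof -
  obtain m where nm: "n = Suc m" using n by (cases n) auto
  have "defect_tail n k = defect_pow k + mat_sum d (\<lambda>j. defect_pow (k + Suc j)) m"
    unfolding defect_tail_def nm by (subst mat_sum_Suc_shift) (auto simp: defect_pow_carrier)
  moreover have "defect_pow (Suc k + m) = 0\<^sub>m d d" using defect_pow_eq_0_mono[OF zero] nm by simp
  then have "defect_tail n (Suc k) = mat_sum d (\<lambda>j. defect_pow (k + Suc j)) m"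
    using mat_sum_carrier[of m "\<lambda>j. defect_pow (k + Suc j)" d] defect_pow_carrier
    unfolding defect_tail_def nm by simp
  ultimately show ?thesis by simp
qed

lemma defect_tail_self: "defect_tail n n = 0\<^sub>m d d"
  unfolding defect_tail_def by (rule mat_sum_eq_0) (auto intro: defect_pow_eq_0_mono[OF zero])

lemma defect_tail_last: "defect_tail n (n - 1) = defect_pow (n - 1)"
  using defect_tail_Suc[of "n - 1"] defect_tail_self defect_pow_carrier[of "n - 1"] n by simp

lemma mat_range_defect_tail_Suc_subset: "mat_range d (defect_tail n (Suc k)) \<subseteq> mat_range d (defect_tail n k)"
proof (rule mat_range_subset_if_dominated[OF psd_defect_tail psd_defect_tail])
  have "complex_of_real 1 \<cdot>\<^sub>m defect_tail n k - defect_tail n (Suc k) = defect_pow k"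
    unfolding defect_tail_Suc[of k] using defect_pow_carrier[of k] defect_tail_carrier[of n "Suc k"]
    by (intro eq_matI) auto
  then show "psd d (complex_of_real 1 \<cdot>\<^sub>m defect_tail n k - defect_tail n (Suc k))"
    using psd_defect_pow by simp
qed

lemma mat_range_defect_tail_strict:
  assumes nonzero: "defect_pow (n - 1) \<noteq> 0\<^sub>m d d" and k: "k < n"
  shows "mat_range d (defect_tail n (Suc k)) \<subset> mat_range d (defect_tail n k)"
proof -
  have "\<not> mat_range d (defect_tail n k) \<subseteq> mat_range d (defect_tail n (Suc k))"
  proof
    assume sub: "mat_range d (defect_tail n k) \<subseteq> mat_range d (defect_tail n (Suc k))"
    define j where "j = n - 1 - k"
    have "k + j = n - 1" "Suc k + j = n" unfolding j_def using k by auto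
    then have "mat_range d (defect_tail n (n - 1)) \<subseteq> mat_range d (defect_tail n n)"
      using positive_map_mat_range_mono[OF positive_map_funpow[OF positive] psd_defect_tail psd_defect_tail sub, of j]
      unfolding funpow_defect_tail by metis
    then have "mat_range d (defect_pow (n - 1)) \<subseteq> {0\<^sub>v d}"
      unfolding defect_tail_last defect_tail_self mat_range_zero_mat .
    then show False using mat_eq_0_if_mat_range_subset[OF defect_pow_carrier] nonzero by blast
  qed
  then show ?thesis using mat_range_defect_tail_Suc_subset[of k] by blast
qed

end

lemma proj_join_supp_defect_pow: "proj_join d {supp d (defect_pow k) | k. k < n} = supp d (defect_tail n 0)"
  using proj_join_supp_eq_supp_mat_sum[where f = defect_pow and m = n] psd_defect_pow
  unfolding defect_tail_def by simp

lemma stab_index_le_rank: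
  assumes ex: "\<exists>n \<ge> 1. defect_pow n = 0\<^sub>m d d" and D: "defect d T \<noteq> 0\<^sub>m d d"
  shows "stab_index d T \<le> mrank d (proj_join d {supp d (defect_pow k) | k. k < stab_index d T})"
proof -
  let ?n = "stab_index d T"
  note zero = defect_pow_stab_index[OF ex] and n = stab_index_ge_1[OF ex]
  interpret vec_space "TYPE(complex)" d .
  have "?n \<le> rank (supp d (defect_tail ?n 0))"
  proof (rule strict_chain_length_le_rank[where W = "\<lambda>k. mat_range d (defect_tail ?n k)"])
    show "supp d (defect_tail ?n 0) \<in> carrier_mat d d" using is_proj_carrier[OF is_proj_supp] defect_tail_carrier .
    show "submodule class_ring (mat_range d (defect_tail ?n k)) V" for k
      unfolding mat_range_def by (rule mult_mat_vec_submodule[OF defect_tail_carrier])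
    show "mat_range d (defect_tail ?n (Suc k)) \<subset> mat_range d (defect_tail ?n k)" if "k < ?n" for k
      by (rule mat_range_defect_tail_strict[OF zero n defect_pow_stab_index_pred[OF ex D] that])
    show "mat_range d (defect_tail ?n 0) \<subseteq> {supp d (defect_tail ?n 0) *\<^sub>v w | w. w \<in> carrier_vec d}"
      using mat_range_supp[OF defect_tail_carrier] unfolding mat_range_def by blast
  qed
  then show ?thesis unfolding mrank_def proj_join_supp_defect_pow .
qed

end

theorem theorem8p9:
  fixes d :: nat
    and T :: "complex mat \<Rightarrow> complex mat"
    and A :: "(complex mat \<Rightarrow> complex mat) set"
  assumes "d \<ge> 1"
    and "completely_positive d T"
    and "subunital d T"
    and "finite A"
    and "T \<in> A"
    and "\<forall>S \<in> A. positive_map d S \<and> subunital d S"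
    and "comp_closed d A"
  shows "(\<exists>n \<ge> 1. (T ^^ n) (defect d T) = 0\<^sub>m d d) \<and> stab_index d T \<le> d \<and>
    (let n = stab_index d T;
         Q = proj_join d {supp d ((T ^^ k) (defect d T)) | k. k < n};
         s = mrank d Q
     in s \<le> d \<and> (defect d T \<noteq> 0\<^sub>m d d \<longrightarrow> n \<le> s))"
proof -
  interpret positive_subunital_map d T
    using assms(3,5,6) by unfold_locales blast+
  obtain a p where "a \<ge> 1" "p \<ge> 1" and per: "\<forall>X \<in> carrier_mat d d. (T ^^ (a + p)) X = (T ^^ a) X"
    using funpow_eventually_periodic[OF assms(4,5,7)] by blast
  then have ex: "\<exists>n \<ge> 1. defect_pow n = 0\<^sub>m d d"
    using defect_pow_eq_0_if_periodic[OF per] by blast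
  let ?n = "stab_index d T"
  let ?s = "mrank d (proj_join d {supp d (defect_pow k) | k. k < ?n})"
  have s_le_d: "?s \<le> d"
    unfolding proj_join_supp_defect_pow mrank_def
    by (rule vec_space.rank_le_nc[OF is_proj_carrier[OF is_proj_supp[OF defect_tail_carrier]]])
  have n_le_s: "?n \<le> ?s" if "defect d T \<noteq> 0\<^sub>m d d"
    using stab_index_le_rank[OF ex that] .
  have "?n \<le> d"
  proof (cases "defect d T = 0\<^sub>m d d")
    case True
    then have "defect_pow 1 = 0\<^sub>m d d" using lin_map_zero[OF lin_map_T] unfolding defect_pow_def by simp
    then show ?thesis using stab_index_least[OF ex, of 1] assms(1) by simp
  qed (use n_le_s s_le_d in simp)
  then show ?thesis using ex s_le_d n_le_s unfolding defect_pow_def Let_def by auto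
qed

end
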